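(* Let $\kappa$ be an infinite regular cardinal with $\kappa^{<\kappa}=\kappa$ and $\mathcal F$ a $(<\kappa)$-complete filter on $\kappa$. Then $\mathbb P(\mathcal F)$, with the orders $\langle\le_\zeta:\zeta<\kappa\rangle$, satisfies Mastering $\kappa$: for every dense $\mathcal D\subseteq\mathbb P(\mathcal F)$, every $p\in\mathbb P(\mathcal F)$ and every $\zeta<\kappa$ there are $q$ with $p\le_\zeta q$ and $\mathcal D'\subseteq\mathcal D$ with $|\mathcal D'|\le\kappa$ which is predense above $q$. Equivalently, whenever $p\Vdash$ "$\dot\tau$ is an ordinal" and $\zeta<\kappa$, there are $q\ge_\zeta p$ and a set of ordinals $X\in\mathbf V$ with $|X|\le\kappa$ such that $q\Vdash\dot\tau\in X$.
   Context: For a subtree $p\subseteq{}^{<\kappa}\kappa$ (nonempty, closed under initial segments), a node $t\in p$ is $\mathcal F$-splitting if $\{\alpha<\kappa: t^\frown\alpha\in p\}\in\mathcal F$. For $s\in p$, $\deg_p(s)=\{i<\mathrm{dom}(s):\exists t\in p\,(t\restriction i=s\restriction i\wedge t(i)\ne s(i))\}$. The forcing $\mathbb P(\mathcal F)$ consists of subtrees $p\subseteq{}^{<\kappa}\kappa$ such that: $\sup\{\mathrm{dom}(s):s\in p\}=\kappa$; every $s\in p$ has an $\mathcal F$-splitting extension $t\supseteq s$ in $p$; (o) for every $s\in p$, the set $\{\alpha:s^\frown\alpha\in p\}$ is either a singleton or belongs to $\mathcal F$; (a) if $\delta<\kappa$ is limit, $s\in{}^\delta\kappa$ and $s\restriction\alpha\in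 p$ for all $\alpha<\delta$, then $s\in p$; (b) for every $s\in p$, $\deg_p(s)$ is closed in $\mathrm{dom}(s)$ (every limit $\gamma<\mathrm{dom}(s)$ with $\deg_p(s)\cap\gamma$ unbounded in $\gamma$ belongs to $\deg_p(s)$). Order: $p\le q$ iff $p\supseteq q$. For $\zeta<\kappa$: $p\le_\zeta q$ iff $p\le q$ and every $s\in p$ with $\mathrm{otp}(\deg_p(s))<\zeta$ belongs to $q$. *)

theory Defs
  imports Main
begin

text \<open>The cardinal kappa is represented by a well-ordered type 'k: the ordinals below kappa
  are the elements of 'k, ordered by the type's order.  kappa itself is the relation kord.\<close>

definition kord :: "('k::wellorder) rel" where
  "kord = {(x, y). x \<le> y}"

text \<open>Elements of ${}^{<\kappa}\kappa$: partial maps whose domain is an initial segment below some delta.\<close>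
definition seqs :: "('k::wellorder \<rightharpoonup> 'k) set" where
  "seqs = {s. \<exists>\<delta>. dom s = {..<\<delta>}}"

definition len :: "('k::wellorder \<rightharpoonup> 'k) \<Rightarrow> 'k" where
  "len s = (LEAST \<delta>. \<delta> \<notin> dom s)"

definition restr :: "('k::wellorder \<rightharpoonup> 'k) \<Rightarrow> 'k \<Rightarrow> ('k \<rightharpoonup> 'k)" where
  "restr s i = s |` {..<i}"

definition ext1 :: "('k::wellorder \<rightharpoonup> 'k) \<Rightarrow> 'k \<Rightarrow> ('k \<rightharpoonup> 'k)" where
  "ext1 s \<alpha> = s(len s \<mapsto> \<alpha>)"

definition is_limit :: "'k::wellorder \<Rightarrow> bool" where
  "is_limit \<gamma> \<longleftrightarrow> (\<exists>\<beta>. \<beta> < \<gamma>) \<and> (\<forall>\<beta><\<gamma>. \<exists>\<beta>'. \<beta> < \<beta>' \<and> \<beta>' < \<gamma>)"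

definition is_filter :: "'k set set \<Rightarrow> bool" where
  "is_filter F \<longleftrightarrow> UNIV \<in> F \<and> {} \<notin> F \<and>
     (\<forall>A B. A \<in> F \<longrightarrow> A \<subseteq> B \<longrightarrow> B \<in> F) \<and>
     (\<forall>A B. A \<in> F \<longrightarrow> B \<in> F \<longrightarrow> A \<inter> B \<in> F)"

definition lt_kappa_complete :: "('k::wellorder) set set \<Rightarrow> bool" where
  "lt_kappa_complete F \<longleftrightarrow>
     (\<forall>X. X \<subseteq> F \<longrightarrow> X \<noteq> {} \<longrightarrow> (card_of X, kord :: 'k rel) \<in> ordLess \<longrightarrow> \<Inter>X \<in> F)"

definition subtree :: "('k::wellorder \<rightharpoonup> 'k) set \<Rightarrow> bool" where
  "subtree p \<longleftrightarrow> p \<noteq> {} \<and> p \<subseteq> seqs \<and> (\<forall>s\<in>p. \<forall>i. restr s i \<in> p)"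

definition succs :: "('k::wellorder \<rightharpoonup> 'k) set \<Rightarrow> ('k \<rightharpoonup> 'k) \<Rightarrow> 'k set" where
  "succs p s = {\<alpha>. ext1 s \<alpha> \<in> p}"

definition F_splitting :: "'k set set \<Rightarrow> ('k::wellorder \<rightharpoonup> 'k) set \<Rightarrow> ('k \<rightharpoonup> 'k) \<Rightarrow> bool" where
  "F_splitting F p t \<longleftrightarrow> t \<in> p \<and> succs p t \<in> F"

definition deg :: "('k::wellorder \<rightharpoonup> 'k) set \<Rightarrow> ('k \<rightharpoonup> 'k) \<Rightarrow> 'k set" where
  "deg p s = {i. i < len s \<and> (\<exists>t\<in>p. restr t i = restr s i \<and> i \<in> dom t \<and> t i \<noteq> s i)}"

definition closed_in :: "'k::wellorder set \<Rightarrow> 'k \<Rightarrow> bool" where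
  "closed_in D \<delta> \<longleftrightarrow> (\<forall>\<gamma><\<delta>. is_limit \<gamma> \<and> (\<forall>\<beta><\<gamma>. \<exists>i\<in>D. \<beta> < i \<and> i < \<gamma>) \<longrightarrow> \<gamma> \<in> D)"

definition PF :: "('k::wellorder) set set \<Rightarrow> ('k \<rightharpoonup> 'k) set set" where
  "PF F = {p. subtree p
      \<and> (\<forall>\<alpha>. \<exists>s\<in>p. \<alpha> < len s)
      \<and> (\<forall>s\<in>p. \<exists>t. s \<subseteq>\<^sub>m t \<and> F_splitting F p t)
      \<and> (\<forall>s\<in>p. (\<exists>\<alpha>. succs p s = {\<alpha>}) \<or> succs p s \<in> F)
      \<and> (\<forall>\<delta> s. is_limit \<delta> \<longrightarrow> dom s = {..<\<delta>} \<longrightarrow> (\<forall>\<alpha><\<delta>. restr s \<alpha> \<in> p) \<longrightarrow> s \<in> p)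
      \<and> (\<forall>s\<in>p. closed_in (deg p s) (len s))}"

definition otp_less :: "'k::wellorder set \<Rightarrow> 'k \<Rightarrow> bool" where
  "otp_less A \<zeta> \<longleftrightarrow> (Restr (kord :: 'k rel) A, Restr (kord :: 'k rel) {..<\<zeta>}) \<in> ordLess"

text \<open>p <= q iff p \<supseteq> q; q is the stronger condition.\<close>
definition le_P :: "('k::wellorder \<rightharpoonup> 'k) set \<Rightarrow> ('k \<rightharpoonup> 'k) set \<Rightarrow> bool" where
  "le_P p q \<longleftrightarrow> q \<subseteq> p"

definition le_zeta :: "'k::wellorder \<Rightarrow> ('k \<rightharpoonup> 'k) set \<Rightarrow> ('k \<rightharpoonup> 'k) set \<Rightarrow> bool" where
  "le_zeta \<zeta> p q \<longleftrightarrow> le_P p q \<and> (\<forall>s\<in>p. otp_less (deg p s) \<zeta> \<longrightarrow> s \<in> q)"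

definition dense_in :: "('k::wellorder \<rightharpoonup> 'k) set set \<Rightarrow> ('k \<rightharpoonup> 'k) set set \<Rightarrow> bool" where
  "dense_in P D \<longleftrightarrow> D \<subseteq> P \<and> (\<forall>p\<in>P. \<exists>d\<in>D. le_P p d)"

definition compatible :: "('k::wellorder \<rightharpoonup> 'k) set set \<Rightarrow> ('k \<rightharpoonup> 'k) set \<Rightarrow> ('k \<rightharpoonup> 'k) set \<Rightarrow> bool" where
  "compatible P a b \<longleftrightarrow> (\<exists>u\<in>P. le_P a u \<and> le_P b u)"

definition predense_above :: "('k::wellorder \<rightharpoonup> 'k) set set \<Rightarrow> ('k \<rightharpoonup> 'k) set set \<Rightarrow> ('k \<rightharpoonup> 'k) set \<Rightarrow> bool" where
  "predense_above P D' q \<longleftrightarrow> (\<forall>r\<in>P. le_P q r \<longrightarrow> (\<exists>d\<in>D'. compatible P r d))"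

end

theory Submission
  imports Defs
begin

text \<open>For every node \<open>t\<close> of \<open>p\<close> density yields \<open>d t \<in> D\<close> inside the cone of \<open>p\<close> through \<open>t\<close>;
  there are at most \<open>|p| \<le> |seqs| = \<kappa>\<close> of them.  Call a node small if its degree in \<open>p\<close> has
  order type below \<zeta>, and let the frontier consist of the minimal non-small nodes.  The
  condition \<open>q\<close> keeps the part of \<open>p\<close> up to the frontier and continues above every immediate
  successor \<open>e\<close> of a frontier node with \<open>d e\<close>; it contains all small nodes, so \<open>p \<le>\<^sub>\<zeta> q\<close>.
  Let \<open>r \<le> q\<close>.  If some node \<open>w\<close> of \<open>r\<close> has its whole \<open>p\<close>-cone inside \<open>r\<close>, then \<open>d w \<le> r\<close>.
  Otherwise \<open>r\<close> can leave \<open>p\<close> above each of its nodes, and iterating this along a chain of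
  length \<kappa> (regularity of \<kappa> keeps the unions at limit stages inside \<open>r\<close>) produces a node
  of \<open>r\<close> whose \<open>p\<close>-degree has order type at least \<zeta>.  Such a node lies above a successor \<open>e\<close>
  of the frontier, and the cone of \<open>r\<close> above it is a common extension of \<open>r\<close> and \<open>d e\<close>.\<close>

unbundle cardinal_syntax

subsection \<open>Sequences of length below \<kappa>\<close>

definition ord_succ :: "'k::wellorder \<Rightarrow> 'k" where
  "ord_succ i = (LEAST j. i < j)"

lemma ord_succ_gt: "i < j \<Longrightarrow> i < ord_succ i"
  unfolding ord_succ_def by (rule LeastI)

lemma ord_succ_le: "i < j \<Longrightarrow> ord_succ i \<le> j"
  unfolding ord_succ_def by (rule Least_le)

lemma less_ord_succ_iff: "i < j \<Longrightarrow> x < ord_succ i \<longleftrightarrow> x \<le> i"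
  by (metis leD le_less_trans linorder_le_less_linear ord_succ_gt ord_succ_le)

lemma len_eqI: "dom s = {..<\<delta>} \<Longrightarrow> len s = \<delta>"
  unfolding len_def by (rule Least_equality) (auto simp: not_less)

lemma seqsI: "dom s = {..<\<delta>} \<Longrightarrow> s \<in> seqs"
  by (auto simp: seqs_def)

lemma dom_seqs: "s \<in> seqs \<Longrightarrow> dom s = {..<len s}"
  unfolding seqs_def using len_eqI by blast

lemma seqs_None: "s \<in> seqs \<Longrightarrow> \<not> i < len s \<Longrightarrow> s i = None"
  using dom_seqs by blast

lemma dom_restr: "s \<in> seqs \<Longrightarrow> dom (restr s i) = {..<min (len s) i}"
  by (auto simp: restr_def dom_seqs)

lemma restr_in_seqs: "s \<in> seqs \<Longrightarrow> restr s i \<in> seqs"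
  by (metis dom_restr seqsI)

lemma len_restr: "s \<in> seqs \<Longrightarrow> len (restr s i) = min (len s) i"
  by (metis dom_restr len_eqI)

lemma restr_restr: "restr (restr s i) j = restr s (min i j)"
  by (auto simp: restr_def restrict_map_def fun_eq_iff)

lemma restr_restr_le: "j \<le> i \<Longrightarrow> restr (restr s i) j = restr s j"
  by (simp add: restr_restr min_absorb2)

lemma restr_eq_self: "s \<in> seqs \<Longrightarrow> len s \<le> i \<Longrightarrow> restr s i = s"
  by (auto simp: restr_def restrict_map_def fun_eq_iff seqs_None)

lemma restr_map_le: "restr s i \<subseteq>\<^sub>m s"
  by (auto simp: restr_def map_le_def)

lemma restr_mono: "i \<le> j \<Longrightarrow> restr s i \<subseteq>\<^sub>m restr s j"
  by (auto simp: restr_def map_le_def)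

lemma map_le_len: "x \<in> seqs \<Longrightarrow> s \<in> seqs \<Longrightarrow> x \<subseteq>\<^sub>m s \<Longrightarrow> len x \<le> len s"
  by (metis map_le_implies_dom_le lessThan_subset_iff dom_seqs)

lemma restr_len_eq_map_le: "x \<in> seqs \<Longrightarrow> s \<in> seqs \<Longrightarrow> x \<subseteq>\<^sub>m s \<Longrightarrow> restr s (len x) = x"
  by (auto simp: restr_def restrict_map_def fun_eq_iff map_le_def dom_seqs seqs_None)

lemma map_le_restr_iff:
  assumes "x \<in> seqs" and "len x \<le> i"
  shows "x \<subseteq>\<^sub>m restr s i \<longleftrightarrow> x \<subseteq>\<^sub>m s"
proof
  assume "x \<subseteq>\<^sub>m restr s i" thus "x \<subseteq>\<^sub>m s" using restr_map_le map_le_trans by blast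
next
  assume "x \<subseteq>\<^sub>m s"
  moreover have "a < i" if "a \<in> dom x" for a using that dom_seqs[OF assms(1)] assms(2) by (auto intro: less_le_trans)
  ultimately show "x \<subseteq>\<^sub>m restr s i" by (auto simp: map_le_def restr_def)
qed

lemma map_le_agree: "a \<subseteq>\<^sub>m b \<or> b \<subseteq>\<^sub>m a \<Longrightarrow> i \<in> dom a \<Longrightarrow> i \<in> dom b \<Longrightarrow> a i = b i"
  unfolding map_le_def by (elim disjE) (simp_all add: Ball_def)

lemma map_le_comparable:
  "x \<in> seqs \<Longrightarrow> y \<in> seqs \<Longrightarrow> s \<in> seqs \<Longrightarrow> x \<subseteq>\<^sub>m s \<Longrightarrow> y \<subseteq>\<^sub>m s \<Longrightarrow> x \<subseteq>\<^sub>m y \<or> y \<subseteq>\<^sub>m x"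
  by (metis linear restr_mono restr_len_eq_map_le)

lemma ext1_at_len [simp]: "ext1 s a (len s) = Some a"
  by (simp add: ext1_def)

lemma restr_ext1: "s \<in> seqs \<Longrightarrow> restr (ext1 s a) (len s) = s"
  by (auto simp: ext1_def restr_def restrict_map_def fun_eq_iff seqs_None)

lemma map_le_ext1: "s \<in> seqs \<Longrightarrow> s \<subseteq>\<^sub>m ext1 s a"
  by (auto simp: ext1_def map_le_def dom_seqs)

lemma
  assumes "s \<in> seqs" and "len s < j"
  shows ext1_in_seqs: "ext1 s a \<in> seqs"
    and len_ext1: "len (ext1 s a) = ord_succ (len s)"
proof -
  have "dom (ext1 s a) = {..<ord_succ (len s)}"
    using assms by (auto simp: ext1_def dom_seqs less_ord_succ_iff)
  thus "ext1 s a \<in> seqs" "len (ext1 s a) = ord_succ (len s)"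
    by (simp_all add: seqsI len_eqI)
qed

lemma restr_ord_succ:
  assumes "t \<in> seqs" and "i < len t" and "t i = Some b"
  shows "restr t (ord_succ i) = ext1 (restr t i) b"
proof -
  have "len (restr t i) = i" using assms by (simp add: len_restr)
  thus ?thesis
    using assms unfolding ext1_def by (auto simp: restr_def restrict_map_def fun_eq_iff less_ord_succ_iff)
qed

subsection \<open>Degrees\<close>

lemma deg_less_len: "i \<in> deg p x \<Longrightarrow> i < len x"
  by (simp add: deg_def)

lemma deg_map_le:
  assumes "x \<in> seqs" and "y \<in> seqs" and "x \<subseteq>\<^sub>m y"
  shows "deg p x \<subseteq> deg p y"
proof
  fix i assume "i \<in> deg p x"
  then obtain t where i: "i < len x" and t: "t \<in> p" "restr t i = restr x i" "i \<in> dom t" "t i \<noteq> x i"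
    unfolding deg_def by blast
  have x: "restr y (len x) = x" using restr_len_eq_map_le[OF assms] .
  hence "restr x i = restr y i" "x i = y i"
    using i by (metis less_imp_le restr_restr_le, metis lessThan_iff restr_def restrict_in)
  moreover have "i < len y" using i map_le_len[OF assms] by simp
  ultimately show "i \<in> deg p y" using t unfolding deg_def by auto
qed

lemma deg_iff_succs:
  assumes "subtree p" and "x \<in> seqs"
  shows "i \<in> deg p x \<longleftrightarrow> i < len x \<and> (\<exists>b\<in>succs p (restr x i). x i \<noteq> Some b)"
proof
  assume "i \<in> deg p x"
  then obtain t b where i: "i < len x" and t: "t \<in> p" "restr t i = restr x i" "t i = Some b" "t i \<noteq> x i"
    unfolding deg_def by blast
  have ts: "t \<in> seqs" using assms(1) t(1) unfolding subtree_def by blast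
  have "i < len t" using t(3) ts seqs_None by fastforce
  hence "ext1 (restr x i) b = restr t (ord_succ i)" using restr_ord_succ[OF ts _ t(3)] t(2) by simp
  moreover have "restr t (ord_succ i) \<in> p" using assms(1) t(1) unfolding subtree_def by blast
  ultimately have "b \<in> succs p (restr x i)" by (simp add: succs_def)
  thus "i < len x \<and> (\<exists>b\<in>succs p (restr x i). x i \<noteq> Some b)"
    using i t(3,4) by force
next
  assume "i < len x \<and> (\<exists>b\<in>succs p (restr x i). x i \<noteq> Some b)"
  then obtain b where i: "i < len x" and b: "ext1 (restr x i) b \<in> p" "x i \<noteq> Some b"
    by (auto simp: succs_def)
  have "len (restr x i) = i" using assms(2) i by (simp add: len_restr)
  hence "restr (ext1 (restr x i) b) i = restr x i" "ext1 (restr x i) b i = Some b"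
    using restr_ext1[OF restr_in_seqs[OF assms(2)]] by (metis, metis ext1_at_len)
  thus "i \<in> deg p x" using i b unfolding deg_def by force
qed

lemma deg_cong:
  assumes "subtree p" and "subtree p'" and "x \<in> seqs"
    and "succs p (restr x i) = succs p' (restr x i)"
  shows "i \<in> deg p x \<longleftrightarrow> i \<in> deg p' x"
  using assms by (simp add: deg_iff_succs)

lemma closed_in_restrict_ge:
  assumes "closed_in A \<delta>"
  shows "closed_in {i\<in>A. c \<le> i} \<delta>"
  unfolding closed_in_def
proof (intro allI impI)
  fix \<gamma> assume \<gamma>: "\<gamma> < \<delta>" "is_limit \<gamma> \<and> (\<forall>\<beta><\<gamma>. \<exists>i\<in>{i\<in>A. c \<le> i}. \<beta> < i \<and> i < \<gamma>)"
  hence "\<gamma> \<in> A" using assms unfolding closed_in_def by blast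
  moreover obtain i where "c \<le> i" "i < \<gamma>" using \<gamma>(2) unfolding is_limit_def by blast
  ultimately show "\<gamma> \<in> {i\<in>A. c \<le> i}" by simp
qed

lemma closed_in_glue:
  assumes A: "closed_in A \<delta>" and B: "closed_in B \<delta>"
  shows "closed_in ({i\<in>A. i \<le> c} \<union> {i\<in>B. c < i}) \<delta>"
  unfolding closed_in_def
proof (intro allI impI)
  fix \<gamma> assume \<gamma>: "\<gamma> < \<delta>"
    and "is_limit \<gamma> \<and> (\<forall>\<beta><\<gamma>. \<exists>i\<in>{i\<in>A. i \<le> c} \<union> {i\<in>B. c < i}. \<beta> < i \<and> i < \<gamma>)"
  hence lim: "is_limit \<gamma>" and cof: "\<forall>\<beta><\<gamma>. \<exists>i\<in>{i\<in>A. i \<le> c} \<union> {i\<in>B. c < i}. \<beta> < i \<and> i < \<gamma>"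
    by blast+
  show "\<gamma> \<in> {i\<in>A. i \<le> c} \<union> {i\<in>B. c < i}"
  proof (cases "\<gamma> \<le> c")
    case True
    hence "\<forall>\<beta><\<gamma>. \<exists>i\<in>A. \<beta> < i \<and> i < \<gamma>" using cof by fastforce
    thus ?thesis using A \<gamma> lim True unfolding closed_in_def by blast
  next
    case False
    have "\<exists>i\<in>B. \<beta> < i \<and> i < \<gamma>" if "\<beta> < \<gamma>" for \<beta>
    proof -
      have "max \<beta> c < \<gamma>" using that False by simp
      then obtain i where "i \<in> {i\<in>A. i \<le> c} \<union> {i\<in>B. c < i}" "max \<beta> c < i" "i < \<gamma>"
        using cof by blast
      thus ?thesis by auto
    qed
    thus ?thesis using B \<gamma> lim False unfolding closed_in_def by auto
  qed
qed

subsection \<open>Order types\<close>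

lemma Field_Restr_kord [simp]: "Field (Restr (kord::'k::wellorder rel) X) = X"
  by (auto simp: Field_def kord_def)

lemma Well_order_kord: "Well_order (kord :: 'k::wellorder rel)"
proof -
  have "kord - Id = {(x::'k, y). x < y}" by (auto simp: kord_def)
  hence "wf ((kord :: 'k rel) - Id)" using wellorder_class.wf by simp
  thus ?thesis
    unfolding well_order_on_def linear_order_on_def partial_order_on_def preorder_on_def
    by (auto simp: refl_on_def trans_def antisym_def total_on_def kord_def Field_def)
qed

lemma strict_mono_on_ge:
  fixes f :: "'k::wellorder \<Rightarrow> 'k"
  assumes "strict_mono_on A f" and "f ` A \<subseteq> A" and "x \<in> A"
  shows "x \<le> f x"
  using assms(3)
proof (induction x rule: less_induct)
  case (less x)
  show ?case
  proof (rule ccontr)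
    assume "\<not> x \<le> f x"
    hence "f x < x" by simp
    moreover have "f x \<in> A" using assms(2) less.prems by blast
    ultimately have "f x \<le> f (f x)" and "f (f x) < f x"
      using less.IH strict_mono_onD[OF assms(1)] less.prems by blast+
    thus False by simp
  qed
qed

text \<open>If \<open>B\<close> had smaller order type than \<open>A\<close>, composing \<open>g\<close> with the isomorphism onto a proper
  initial segment of \<open>A\<close> would give a strictly increasing self-map of \<open>A\<close> pushing
  some point below itself.\<close>

lemma strict_mono_on_ordLeq:
  fixes g :: "'k::wellorder \<Rightarrow> 'k"
  assumes g: "strict_mono_on A g" and gA: "g ` A \<subseteq> B"
  shows "Restr kord A \<le>o Restr kord B"
proof (rule ccontr)
  assume not_le: "\<not> Restr kord A \<le>o Restr kord B"
  have WA: "Well_order (Restr kord A)" and WB: "Well_order (Restr kord B)"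
    using Well_order_Restr[OF Well_order_kord] by blast+
  have "Restr kord B <o Restr kord A" using not_ordLeq_iff_ordLess[OF WB WA] not_le by blast
  then obtain a where "a \<in> Field (Restr kord A)"
    and iso: "Restr kord B =o Restr (Restr kord A) (underS (Restr kord A) a)"
    using ordLess_iff_ordIso_Restr[OF WA WB] by blast
  hence a: "a \<in> A" by simp
  define U where "U = {b\<in>A. b < a}"
  have U: "underS (Restr kord A) a = U" using a by (auto simp: underS_def U_def kord_def)
  have R: "Restr (Restr kord A) U = Restr kord U" by (rule Restr_subset) (auto simp: U_def)
  obtain h where "iso (Restr kord B) (Restr kord U) h"
    using iso unfolding U R ordIso_def by blast
  hence bij: "bij_betw h B U"
    and pres: "\<forall>b\<in>B. \<forall>b'\<in>B. (b, b') \<in> Restr kord B \<longleftrightarrow> (h b, h b') \<in> Restr kord U"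
    unfolding iso_iff2 Field_Restr_kord by blast+
  have "strict_mono_on A (h \<circ> g)"
  proof (rule strict_mono_onI)
    fix x y assume "x \<in> A" "y \<in> A" "x < y"
    hence lt: "g x < g y" and gB: "g x \<in> B" "g y \<in> B" using g gA strict_mono_onD by blast+
    hence "(g x, g y) \<in> Restr kord B" by (auto simp: kord_def)
    hence "h (g x) \<le> h (g y)" using pres gB by (auto simp: kord_def)
    moreover have "h (g x) \<noteq> h (g y)"
      using bij gB lt unfolding bij_betw_def by (metis inj_on_contraD less_irrefl)
    ultimately show "(h \<circ> g) x < (h \<circ> g) y" by simp
  qed
  moreover have hU: "(h \<circ> g) ` A \<subseteq> U" using bij gA unfolding bij_betw_def by auto
  ultimately have "a \<le> h (g a)" using strict_mono_on_ge[of A "h \<circ> g" a] a U_def by auto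
  moreover have "h (g a) < a" using hU a unfolding U_def by auto
  ultimately show False by simp
qed

lemma otp_less_subset: "A \<subseteq> B \<Longrightarrow> otp_less B \<zeta> \<Longrightarrow> otp_less A \<zeta>"
  unfolding otp_less_def
  using strict_mono_on_ordLeq[of A id B] ordLeq_ordLess_trans by (fastforce simp: strict_mono_on_def)

lemma not_otp_less_if_strict_mono_on:
  assumes "strict_mono_on {..<\<zeta>} \<pi>" and "\<pi> ` {..<\<zeta>} \<subseteq> A"
  shows "\<not> otp_less A \<zeta>"
  using strict_mono_on_ordLeq[OF assms] not_ordLess_ordLeq unfolding otp_less_def by blast

subsection \<open>Chains of length \<kappa>\<close>

lemma regularCard_bounded:
  fixes f :: "'k::wellorder \<Rightarrow> 'k"
  assumes co: "card_order (kord::'k rel)" and reg: "regularCard (kord::'k rel)"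
  shows "\<exists>M. \<forall>\<eta><\<xi>. f \<eta> \<le> M"
proof (rule ccontr)
  assume unbounded: "\<nexists>M. \<forall>\<eta><\<xi>. f \<eta> \<le> M"
  have F: "Field (kord::'k rel) = UNIV" by (auto simp: Field_def kord_def)
  have "cofinal (f ` {..<\<xi>}) kord"
    unfolding cofinal_def
  proof
    fix a :: 'k
    obtain \<eta> where "\<eta> < \<xi>" "\<not> f \<eta> \<le> a" using unbounded by blast
    thus "\<exists>b\<in>f ` {..<\<xi>}. a \<noteq> b \<and> (a, b) \<in> kord" by (auto simp: kord_def)
  qed
  hence "|f ` {..<\<xi>}| =o (kord::'k rel)" using reg F unfolding regularCard_def by blast
  moreover have "underS kord \<xi> = {..<\<xi>}" by (auto simp: underS_def kord_def)
  hence "|{..<\<xi>}| <o (kord::'k rel)" using card_of_underS[of kord \<xi>] co F by simp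
  hence "|f ` {..<\<xi>}| <o (kord::'k rel)" using card_of_image ordLeq_ordLess_trans by blast
  ultimately show False using not_ordLess_ordIso by blast
qed

lemma downset_eq_lessThan:
  fixes A :: "'k::wellorder set"
  assumes down: "\<forall>x\<in>A. \<forall>y<x. y \<in> A" and "M \<notin> A"
  shows "A = {..<(LEAST x. x \<notin> A)}"
proof
  have least: "(LEAST x. x \<notin> A) \<notin> A" using assms(2) by (rule LeastI)
  show "A \<subseteq> {..<(LEAST x. x \<notin> A)}"
  proof
    fix x assume "x \<in> A"
    hence "\<not> (LEAST x. x \<notin> A) \<le> x" using down least by (metis order.order_iff_strict)
    thus "x \<in> {..<(LEAST x. x \<notin> A)}" by simp
  qed
  show "{..<(LEAST x. x \<notin> A)} \<subseteq> A" using not_less_Least by blast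
qed

definition lub :: "('k \<rightharpoonup> 'k) set \<Rightarrow> ('k \<rightharpoonup> 'k)" where
  "lub C = (\<lambda>x. if \<exists>c\<in>C. x \<in> dom c then (SOME c. c \<in> C \<and> x \<in> dom c) x else None)"

lemma lub_some:
  assumes "c \<in> C" and "x \<in> dom c"
  shows "(SOME c. c \<in> C \<and> x \<in> dom c) \<in> C" and "x \<in> dom (SOME c. c \<in> C \<and> x \<in> dom c)"
    and "lub C x = (SOME c. c \<in> C \<and> x \<in> dom c) x"
proof -
  have "\<exists>c. c \<in> C \<and> x \<in> dom c" using assms by blast
  hence "(SOME c. c \<in> C \<and> x \<in> dom c) \<in> C \<and> x \<in> dom (SOME c. c \<in> C \<and> x \<in> dom c)"
    by (rule someI_ex)
  thus "(SOME c. c \<in> C \<and> x \<in> dom c) \<in> C" "x \<in> dom (SOME c. c \<in> C \<and> x \<in> dom c)" by blast+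
  show "lub C x = (SOME c. c \<in> C \<and> x \<in> dom c) x" using assms unfolding lub_def by auto
qed

lemma dom_lub: "dom (lub C) = (\<Union>c\<in>C. dom c)"
proof
  show "dom (lub C) \<subseteq> (\<Union>c\<in>C. dom c)" unfolding lub_def by (auto split: if_splits)
  show "(\<Union>c\<in>C. dom c) \<subseteq> dom (lub C)"
  proof
    fix x assume "x \<in> (\<Union>c\<in>C. dom c)"
    then obtain c where "c \<in> C" "x \<in> dom c" by blast
    from lub_some[OF this] show "x \<in> dom (lub C)" by (simp add: domIff)
  qed
qed

lemma lub_upper:
  assumes "Complete_Partial_Order.chain (\<subseteq>\<^sub>m) C" and "c \<in> C"
  shows "c \<subseteq>\<^sub>m lub C"
  unfolding map_le_def
proof
  fix x assume x: "x \<in> dom c"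
  note some = lub_some[OF assms(2) x]
  have "lub C x = (SOME c. c \<in> C \<and> x \<in> dom c) x" by (rule some(3))
  also have "\<dots> = c x"
    using map_le_agree[of _ c x] assms some(1,2) x unfolding chain_def by blast
  finally show "c x = lub C x" by simp
qed

definition limit_closed :: "('k::wellorder \<rightharpoonup> 'k) set \<Rightarrow> bool" where
  "limit_closed p \<longleftrightarrow> (\<forall>\<delta> s. is_limit \<delta> \<longrightarrow> dom s = {..<\<delta>} \<longrightarrow> (\<forall>\<alpha><\<delta>. restr s \<alpha> \<in> p) \<longrightarrow> s \<in> p)"

lemma dom_lub_seqs: "C \<subseteq> seqs \<Longrightarrow> dom (lub C) = (\<Union>c\<in>C. {..<len c})"
  by (auto simp: dom_lub dom_seqs subset_iff)

lemma lub_in_seqs: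
  assumes Cs: "C \<subseteq> seqs" and bounded: "\<forall>c\<in>C. len c \<le> M"
  shows "lub C \<in> seqs"
proof -
  have "\<forall>x\<in>dom (lub C). \<forall>y<x. y \<in> dom (lub C)" unfolding dom_lub_seqs[OF Cs] using less_trans by blast
  moreover have "M \<notin> dom (lub C)" using bounded unfolding dom_lub_seqs[OF Cs] by (auto dest: leD)
  ultimately obtain \<delta> where "dom (lub C) = {..<\<delta>}" by (blast dest: downset_eq_lessThan)
  thus ?thesis by (rule seqsI)
qed

text \<open>A chain whose union has successor (or zero) length contains its union; at limit
  lengths closure of the tree takes over.\<close>

lemma lub_chain_in_tree:
  assumes r: "subtree r" "limit_closed r" and C: "C \<subseteq> r" "C \<noteq> {}" "Complete_Partial_Order.chain (\<subseteq>\<^sub>m) C"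
    and lub_seqs: "lub C \<in> seqs"
  shows "lub C \<in> r"
proof -
  have Cs: "C \<subseteq> seqs" using r(1) C(1) unfolding subtree_def by blast
  define \<delta> where "\<delta> = len (lub C)"
  have dom_C: "{..<\<delta>} = (\<Union>c\<in>C. {..<len c})" using dom_lub_seqs[OF Cs] dom_seqs[OF lub_seqs] \<delta>_def by simp
  have lub_restr: "restr (lub C) (len c) = c" if "c \<in> C" for c
    by (rule restr_len_eq_map_le) (use Cs that lub_upper[OF C(3)] lub_seqs in auto)
  show ?thesis
  proof (cases "is_limit \<delta>")
    case True
    have "restr (lub C) \<alpha> \<in> r" if "\<alpha> < \<delta>" for \<alpha>
    proof -
      have "\<alpha> \<in> (\<Union>c\<in>C. {..<len c})" using that by (simp add: dom_C[symmetric])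
      then obtain c where c: "c \<in> C" "\<alpha> < len c" by blast
      have "restr (lub C) \<alpha> = restr (restr (lub C) (len c)) \<alpha>"
        using restr_restr_le[of \<alpha> "len c" "lub C"] c(2) by simp
      hence "restr (lub C) \<alpha> = restr c \<alpha>" using lub_restr[OF c(1)] by simp
      thus ?thesis using r(1) c C(1) unfolding subtree_def by auto
    qed
    thus ?thesis using r(2) True dom_seqs[OF lub_seqs] unfolding limit_closed_def \<delta>_def by blast
  next
    case False
    have "\<exists>c\<in>C. \<not> len c < \<delta>"
    proof (cases "\<exists>\<beta>. \<beta> < \<delta>")
      case True
      then obtain \<beta> where \<beta>: "\<beta> < \<delta>" "\<forall>\<beta>'. \<beta> < \<beta>' \<longrightarrow> \<not> \<beta>' < \<delta>"
        using False unfolding is_limit_def by blast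
      hence "\<beta> \<in> (\<Union>c\<in>C. {..<len c})" by (simp add: dom_C[symmetric])
      then obtain c where "c \<in> C" "\<beta> < len c" by blast
      thus ?thesis using \<beta>(2) by blast
    next
      case False
      then obtain c where "c \<in> C" using C(2) by blast
      thus ?thesis using False by blast
    qed
    then obtain c where c: "c \<in> C" "\<delta> \<le> len c" by (auto simp: not_less)
    moreover have "len c \<le> \<delta>" using map_le_len lub_upper[OF C(3) c(1)] Cs c(1) lub_seqs \<delta>_def by blast
    ultimately have "lub C = restr (lub C) (len c)" using restr_eq_self[OF lub_seqs] \<delta>_def by simp
    thus ?thesis using lub_restr c(1) C(1) by auto
  qed
qed

text \<open>\<open>B \<xi>\<close> is the union of \<open>w0\<close> and all \<open>N (B \<eta>)\<close> with \<open>\<eta> < \<xi>\<close>; regularity of \<kappa> bounds the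
  lengths of these fewer than \<kappa> nodes, so the union is again a node of \<open>r\<close>.\<close>

lemma kappa_chain:
  fixes r :: "('k::wellorder \<rightharpoonup> 'k) set"
  assumes co: "card_order (kord::'k::wellorder rel)" and reg: "regularCard (kord::'k rel)"
    and r: "subtree r" "limit_closed r" and w0: "w0 \<in> r"
    and N: "\<forall>w\<in>r. N w \<in> r \<and> w \<subseteq>\<^sub>m N w"
  shows "\<exists>B. \<forall>\<xi>::'k. B \<xi> \<in> r \<and> w0 \<subseteq>\<^sub>m B \<xi> \<and> (\<forall>\<eta><\<xi>. N (B \<eta>) \<subseteq>\<^sub>m B \<xi>)"
proof -
  define H where "H = (\<lambda>g (\<xi>::'k). N (lub (insert w0 (g ` {..<\<xi>}))))"
  define G where "G = wfrec {(x, y). x < y} H"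
  define B where "B = (\<lambda>\<xi>. lub (insert w0 (G ` {..<\<xi>})))"
  have G_B: "G \<xi> = N (B \<xi>)" for \<xi>
  proof -
    have "G \<xi> = H (cut G {(x, y). x < y} \<xi>) \<xi>" unfolding G_def by (rule wfrec[OF wellorder_class.wf])
    moreover have "cut G {(x, y). x < y} \<xi> ` {..<\<xi>} = G ` {..<\<xi>}"
      by (auto simp: cut_apply image_def)
    ultimately show ?thesis unfolding H_def B_def by simp
  qed
  have "B \<xi> \<in> r \<and> w0 \<subseteq>\<^sub>m B \<xi> \<and> (\<forall>\<eta><\<xi>. G \<eta> \<subseteq>\<^sub>m B \<xi>)" for \<xi>
  proof (induction \<xi> rule: less_induct)
    case (less \<xi>)
    let ?C = "insert w0 (G ` {..<\<xi>})"
    have G_r: "G \<eta> \<in> r" and B_G: "B \<eta> \<subseteq>\<^sub>m G \<eta>" if "\<eta> < \<xi>" for \<eta>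
      using less.IH[OF that] N G_B by auto
    have C_r: "?C \<subseteq> r" using w0 G_r by auto
    have chain: "Complete_Partial_Order.chain (\<subseteq>\<^sub>m) ?C"
    proof -
      have "w0 \<subseteq>\<^sub>m G \<eta>" if "\<eta> < \<xi>" for \<eta>
        using less.IH[OF that] B_G[OF that] map_le_trans by blast
      moreover have "G \<eta> \<subseteq>\<^sub>m G \<eta>'" if "\<eta> < \<eta>'" "\<eta>' < \<xi>" for \<eta> \<eta>'
        using less.IH[OF that(2)] that B_G[OF that(2)] map_le_trans by blast
      hence "G \<eta> \<subseteq>\<^sub>m G \<eta>' \<or> G \<eta>' \<subseteq>\<^sub>m G \<eta>" if "\<eta> < \<xi>" "\<eta>' < \<xi>" for \<eta> \<eta>'
        using that by (metis linorder_neqE map_le_refl)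
      ultimately show ?thesis unfolding chain_def by auto
    qed
    obtain M where "\<forall>\<eta><\<xi>. len (G \<eta>) \<le> M"
      using regularCard_bounded[OF co reg, where f="\<lambda>\<eta>. len (G \<eta>)" and \<xi>=\<xi>] by blast
    hence "\<forall>c\<in>?C. len c \<le> max M (len w0)" by (auto simp: le_max_iff_disj)
    moreover have "?C \<subseteq> seqs" using C_r r(1) unfolding subtree_def by blast
    ultimately have "lub ?C \<in> seqs" using lub_in_seqs by blast
    hence "B \<xi> \<in> r" unfolding B_def using lub_chain_in_tree[OF r C_r _ chain] by blast
    thus ?case unfolding B_def using lub_upper[OF chain] by auto
  qed
  thus ?thesis using G_B by metis
qed

subsection \<open>Conditions\<close>

lemma
  assumes "p \<in> PF F"
  shows PF_subtree: "subtree p"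
    and PF_nonempty: "p \<noteq> {}"
    and PF_in_seqs: "s \<in> p \<Longrightarrow> s \<in> seqs"
    and PF_restr: "s \<in> p \<Longrightarrow> restr s i \<in> p"
    and PF_unbounded: "\<exists>s\<in>p. \<alpha> < len s"
    and PF_splitting_above: "s \<in> p \<Longrightarrow> \<exists>t. s \<subseteq>\<^sub>m t \<and> t \<in> p \<and> succs p t \<in> F"
    and PF_succs: "s \<in> p \<Longrightarrow> (\<exists>\<alpha>. succs p s = {\<alpha>}) \<or> succs p s \<in> F"
    and PF_limit_closed: "limit_closed p"
    and PF_deg_closed: "s \<in> p \<Longrightarrow> closed_in (deg p s) (len s)"
  using assms unfolding PF_def subtree_def F_splitting_def limit_closed_def by blast+

lemma PF_I:
  assumes "subtree p" and "\<forall>\<alpha>. \<exists>s\<in>p. \<alpha> < len s"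
    and "\<forall>s\<in>p. \<exists>t. s \<subseteq>\<^sub>m t \<and> t \<in> p \<and> succs p t \<in> F"
    and "\<forall>s\<in>p. (\<exists>\<alpha>. succs p s = {\<alpha>}) \<or> succs p s \<in> F"
    and "limit_closed p" and "\<forall>s\<in>p. closed_in (deg p s) (len s)"
  shows "p \<in> PF F"
  using assms unfolding PF_def F_splitting_def limit_closed_def by blast

lemma
  assumes "p \<in> PF F" and "s \<in> p"
  shows PF_ext1_in_seqs: "ext1 s a \<in> seqs"
    and PF_len_ext1: "len (ext1 s a) = ord_succ (len s)"
    and PF_len_less_ext1: "len s < len (ext1 s a)"
proof -
  obtain t where "t \<in> p" "len s < len t" using PF_unbounded[OF assms(1)] by blast
  note bound = assms(2)[THEN PF_in_seqs[OF assms(1)]] this(2)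
  show "ext1 s a \<in> seqs" "len (ext1 s a) = ord_succ (len s)" using ext1_in_seqs[OF bound] len_ext1[OF bound] .
  thus "len s < len (ext1 s a)" using ord_succ_gt[OF bound(2)] by simp
qed

lemma filter_nonempty: "is_filter F \<Longrightarrow> A \<in> F \<Longrightarrow> \<exists>a. a \<in> A"
  unfolding is_filter_def by (metis ex_in_conv)

lemma filter_mono: "is_filter F \<Longrightarrow> A \<in> F \<Longrightarrow> A \<subseteq> B \<Longrightarrow> B \<in> F"
  unfolding is_filter_def by blast

lemma PF_ext1_exists:
  assumes "is_filter F" and "p \<in> PF F" and "s \<in> p"
  shows "\<exists>\<alpha>. ext1 s \<alpha> \<in> p"
  using PF_succs[OF assms(2,3)] filter_nonempty[OF assms(1)] unfolding succs_def by blast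

lemma PF_extends_beyond:
  fixes r :: "('k::wellorder \<rightharpoonup> 'k) set"
  assumes co: "card_order (kord::'k::wellorder rel)" and reg: "regularCard (kord::'k rel)"
    and F: "is_filter F" and r: "r \<in> PF F" and w: "w \<in> r"
  shows "\<exists>z\<in>r. w \<subseteq>\<^sub>m z \<and> \<alpha> < len z"
proof -
  define N where "N = (\<lambda>w. ext1 w (SOME \<alpha>. ext1 w \<alpha> \<in> r))"
  have N: "N w \<in> r" "w \<subseteq>\<^sub>m N w" "len w < len (N w)" if "w \<in> r" for w
    using someI_ex[OF PF_ext1_exists[OF F r that]] map_le_ext1 PF_in_seqs[OF r that]
      PF_len_less_ext1[OF r that] unfolding N_def by blast+
  obtain B where B: "\<forall>\<xi>::'k. B \<xi> \<in> r \<and> w \<subseteq>\<^sub>m B \<xi> \<and> (\<forall>\<eta><\<xi>. N (B \<eta>) \<subseteq>\<^sub>m B \<xi>)"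
    using kappa_chain[OF co reg PF_subtree[OF r] PF_limit_closed[OF r] w, of N] N by blast
  have "strict_mono_on UNIV (\<lambda>\<xi>. len (B \<xi>))"
  proof (rule strict_mono_onI)
    fix \<xi> \<eta> :: 'k assume "\<xi> < \<eta>"
    hence "N (B \<xi>) \<subseteq>\<^sub>m B \<eta>" using B by blast
    hence "len (N (B \<xi>)) \<le> len (B \<eta>)"
      using map_le_len PF_in_seqs[OF r] N(1) B by blast
    thus "len (B \<xi>) < len (B \<eta>)" using N(3) B by (meson order.strict_trans2)
  qed
  hence "\<alpha> \<le> len (B \<alpha>)" using strict_mono_on_ge[of UNIV] by blast
  moreover have "len (B \<alpha>) < len (N (B \<alpha>))" using N(3) B by blast
  ultimately have "\<alpha> < len (N (B \<alpha>))" by simp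
  moreover have "w \<subseteq>\<^sub>m N (B \<alpha>)" using B N(2)[of "B \<alpha>"] map_le_trans by blast
  ultimately show ?thesis using N(1) B by blast
qed

subsection \<open>Cones\<close>

definition cone_at :: "('k::wellorder \<rightharpoonup> 'k) set \<Rightarrow> ('k \<rightharpoonup> 'k) \<Rightarrow> ('k \<rightharpoonup> 'k) set" where
  "cone_at p t = {u\<in>p. u \<subseteq>\<^sub>m t \<or> t \<subseteq>\<^sub>m u}"

lemma cone_at_subset: "cone_at p t \<subseteq> p"
  by (auto simp: cone_at_def)

lemma subtree_cone_at:
  assumes p: "subtree p" and t: "t \<in> p"
  shows "subtree (cone_at p t)"
  unfolding subtree_def
proof (intro conjI ballI allI)
  have ps: "p \<subseteq> seqs" using p unfolding subtree_def by blast
  show "cone_at p t \<noteq> {}" using t unfolding cone_at_def by auto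
  show "cone_at p t \<subseteq> seqs" using ps cone_at_subset by blast
  fix s i assume s: "s \<in> cone_at p t"
  hence sp: "s \<in> p" using cone_at_subset by blast
  have ss: "s \<in> seqs" and ts: "t \<in> seqs" using sp t ps by blast+
  have "restr s i \<subseteq>\<^sub>m t \<or> t \<subseteq>\<^sub>m restr s i"
  proof (cases "s \<subseteq>\<^sub>m t")
    case True thus ?thesis using restr_map_le map_le_trans by blast
  next
    case False
    hence "t \<subseteq>\<^sub>m s" using s unfolding cone_at_def by blast
    thus ?thesis using map_le_comparable[OF restr_in_seqs[OF ss] ts ss restr_map_le] by blast
  qed
  moreover have "restr s i \<in> p" using p sp unfolding subtree_def by blast
  ultimately show "restr s i \<in> cone_at p t" unfolding cone_at_def by blast
qed

lemma cone_at_subsetI: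
  assumes X: "subtree X" "w \<in> X" and p: "p \<subseteq> seqs" and up: "\<forall>z\<in>p. w \<subseteq>\<^sub>m z \<longrightarrow> z \<in> X"
  shows "cone_at p w \<subseteq> X"
proof
  fix z assume z: "z \<in> cone_at p w"
  have zs: "z \<in> seqs" and ws: "w \<in> seqs" using z p X cone_at_subset unfolding subtree_def by blast+
  show "z \<in> X"
  proof (cases "z \<subseteq>\<^sub>m w")
    case True
    hence "z = restr w (len z)" using restr_len_eq_map_le[OF zs ws] by simp
    thus ?thesis using X unfolding subtree_def by metis
  next
    case False thus ?thesis using z up unfolding cone_at_def by blast
  qed
qed

lemma succs_cone_at_above: "x \<in> seqs \<Longrightarrow> t \<subseteq>\<^sub>m x \<Longrightarrow> succs (cone_at p t) x = succs p x"
  using map_le_ext1 map_le_trans unfolding succs_def cone_at_def by blast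

lemma succs_cone_at_below:
  assumes p: "subtree p" and t: "t \<in> p" and xs: "x \<in> seqs" and xt: "x \<subseteq>\<^sub>m t" "x \<noteq> t"
  shows "\<exists>\<gamma>. succs (cone_at p t) x = {\<gamma>}"
proof -
  have ts: "t \<in> seqs" using p t unfolding subtree_def by blast
  have xr: "restr t (len x) = x" using restr_len_eq_map_le[OF xs ts xt(1)] .
  have "len x < len t"
    using map_le_len[OF xs ts xt(1)] xr xt(2) restr_eq_self[OF ts] by (metis order.not_eq_order_implies_strict order_refl)
  then obtain \<gamma> where \<gamma>: "t (len x) = Some \<gamma>" and e: "restr t (ord_succ (len x)) = ext1 x \<gamma>"
    using restr_ord_succ[OF ts] xr dom_seqs[OF ts] by (metis domD lessThan_iff)
  have "restr t (ord_succ (len x)) \<in> p" using p t unfolding subtree_def by blast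
  hence "ext1 x \<gamma> \<in> cone_at p t" using e restr_map_le[of t] unfolding cone_at_def by (metis (mono_tags, lifting) mem_Collect_eq)
  moreover have "a = \<gamma>" if "ext1 x a \<in> cone_at p t" for a
  proof -
    have "ext1 x a \<subseteq>\<^sub>m t \<or> t \<subseteq>\<^sub>m ext1 x a" using that unfolding cone_at_def by blast
    moreover have "len x \<in> dom (ext1 x a)" "len x \<in> dom t" using \<gamma> by auto
    ultimately have "t (len x) = Some a" using map_le_agree ext1_at_len by metis
    thus "a = \<gamma>" using \<gamma> by simp
  qed
  ultimately have "succs (cone_at p t) x = {\<gamma>}" unfolding succs_def by blast
  thus ?thesis by blast
qed

lemma limit_closed_cone_at:
  assumes p: "limit_closed p" and ts: "t \<in> seqs"
  shows "limit_closed (cone_at p t)"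
  unfolding limit_closed_def
proof (intro allI impI)
  fix \<delta> s assume lim: "is_limit \<delta>" and d: "dom s = {..<\<delta>}" and rs: "\<forall>\<alpha><\<delta>. restr s \<alpha> \<in> cone_at p t"
  have sp: "s \<in> p" using p lim d rs cone_at_subset unfolding limit_closed_def by blast
  have ss: "s \<in> seqs" and ls: "len s = \<delta>" using d by (simp_all add: seqsI len_eqI)
  show "s \<in> cone_at p t"
  proof (cases "len t < \<delta>")
    case True
    have r: "restr s (len t) \<in> cone_at p t" using rs True by blast
    have lr: "len (restr s (len t)) = len t" using len_restr[OF ss] ls True by simp
    have "t \<subseteq>\<^sub>m restr s (len t)"
    proof (cases "restr s (len t) \<subseteq>\<^sub>m t")
      case True
      hence "restr t (len t) = restr s (len t)"
        using restr_len_eq_map_le[OF restr_in_seqs[OF ss] ts True] lr by simp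
      thus ?thesis using restr_eq_self[OF ts] by simp
    next
      case False thus ?thesis using r unfolding cone_at_def by blast
    qed
    hence "t \<subseteq>\<^sub>m s" using restr_map_le map_le_trans by blast
    thus ?thesis using sp unfolding cone_at_def by blast
  next
    case False
    have "s \<subseteq>\<^sub>m t"
      unfolding map_le_def
    proof
      fix x assume x: "x \<in> dom s"
      hence xd: "x < \<delta>" using d by blast
      then obtain \<alpha> where \<alpha>: "x < \<alpha>" "\<alpha> < \<delta>" using lim unfolding is_limit_def by blast
      have "restr s \<alpha> \<subseteq>\<^sub>m t \<or> t \<subseteq>\<^sub>m restr s \<alpha>" using rs \<alpha>(2) unfolding cone_at_def by blast
      moreover have "x \<in> dom (restr s \<alpha>)" using x \<alpha> by (simp add: restr_def)
      moreover have "x \<in> dom t" using xd False dom_seqs[OF ts] by auto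
      ultimately have "restr s \<alpha> x = t x" by (rule map_le_agree)
      thus "s x = t x" using \<alpha> by (simp add: restr_def)
    qed
    thus ?thesis using sp unfolding cone_at_def by blast
  qed
qed

lemma deg_cone_at:
  assumes p: "subtree p" and t: "t \<in> p" and x: "x \<in> cone_at p t"
  shows "deg (cone_at p t) x = {i\<in>deg p x. len t \<le> i}"
proof -
  have xs: "x \<in> seqs" and ts: "t \<in> seqs" using p t x cone_at_subset unfolding subtree_def by blast+
  have comparable: "x \<subseteq>\<^sub>m t \<or> t \<subseteq>\<^sub>m x" using x unfolding cone_at_def by blast
  have "i \<in> deg (cone_at p t) x \<longleftrightarrow> i \<in> deg p x \<and> len t \<le> i" for i
  proof (cases "len t \<le> i \<and> i < len x")
    case True
    have "\<not> x \<subseteq>\<^sub>m t"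
    proof
      assume "x \<subseteq>\<^sub>m t"
      hence "len x \<le> i" using map_le_len[OF xs ts] True order.trans by blast
      thus False using True leD by blast
    qed
    hence "t \<subseteq>\<^sub>m x" using comparable by blast
    moreover have "len t \<le> i" using True by simp
    ultimately have "t \<subseteq>\<^sub>m restr x i" using map_le_restr_iff[OF ts] by blast
    hence "succs (cone_at p t) (restr x i) = succs p (restr x i)"
      by (rule succs_cone_at_above[OF restr_in_seqs[OF xs]])
    hence "i \<in> deg (cone_at p t) x \<longleftrightarrow> i \<in> deg p x" by (rule deg_cong[OF subtree_cone_at[OF p t] p xs])
    thus ?thesis using True by simp
  next
    case False
    have "i \<notin> deg (cone_at p t) x"
    proof
      assume i: "i \<in> deg (cone_at p t) x"
      then obtain w where w: "w \<in> cone_at p t" "i \<in> dom w" "w i \<noteq> x i" unfolding deg_def by blast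
      have "i < len x" using i by (rule deg_less_len)
      hence "i < len t" using False by simp
      hence it: "i \<in> dom t" using dom_seqs[OF ts] by simp
      have ix: "i \<in> dom x" using dom_seqs[OF xs] \<open>i < len x\<close> by simp
      have "w \<subseteq>\<^sub>m t \<or> t \<subseteq>\<^sub>m w" using w(1) unfolding cone_at_def by simp
      hence "w i = t i" using w(2) it by (rule map_le_agree)
      moreover have "x i = t i" using comparable ix it by (rule map_le_agree)
      ultimately show False using w(3) by simp
    qed
    moreover have "\<not> (i \<in> deg p x \<and> len t \<le> i)" using False deg_less_len by blast
    ultimately show ?thesis by blast
  qed
  thus ?thesis by blast
qed

lemma cone_at_splitting_above:
  assumes p: "p \<in> PF F" and t: "t \<in> p" and s: "s \<in> cone_at p t"
  shows "\<exists>t'. s \<subseteq>\<^sub>m t' \<and> t' \<in> cone_at p t \<and> succs (cone_at p t) t' \<in> F"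
proof -
  define b where "b = (if s \<subseteq>\<^sub>m t then t else s)"
  have b: "b \<in> p" "t \<subseteq>\<^sub>m b" "s \<subseteq>\<^sub>m b" using s t unfolding b_def cone_at_def by auto
  obtain t' where t': "b \<subseteq>\<^sub>m t'" "t' \<in> p" "succs p t' \<in> F" using PF_splitting_above[OF p b(1)] by blast
  have "t \<subseteq>\<^sub>m t'" using b(2) t'(1) map_le_trans by blast
  hence "t' \<in> cone_at p t" using t'(2) by (simp add: cone_at_def)
  moreover have "succs (cone_at p t) t' \<in> F"
    using t'(3) succs_cone_at_above[OF PF_in_seqs[OF p t'(2)] \<open>t \<subseteq>\<^sub>m t'\<close>] by simp
  ultimately show ?thesis using b(3) t'(1) map_le_trans by blast
qed

lemma cone_at_succs:
  assumes p: "p \<in> PF F" and t: "t \<in> p" and s: "s \<in> cone_at p t"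
  shows "(\<exists>\<alpha>. succs (cone_at p t) s = {\<alpha>}) \<or> succs (cone_at p t) s \<in> F"
proof (cases "t \<subseteq>\<^sub>m s")
  case True
  have "s \<in> p" using s cone_at_subset by blast
  thus ?thesis using succs_cone_at_above[OF PF_in_seqs[OF p] True] PF_succs[OF p] by simp
next
  case False
  hence "s \<subseteq>\<^sub>m t" "s \<noteq> t" using s unfolding cone_at_def by auto
  thus ?thesis using succs_cone_at_below[OF PF_subtree[OF p] t] PF_in_seqs[OF p] s cone_at_subset by blast
qed

lemma cone_at_PF:
  fixes p :: "('k::wellorder \<rightharpoonup> 'k) set"
  assumes co: "card_order (kord::'k rel)" and reg: "regularCard (kord::'k rel)"
    and F: "is_filter F" and p: "p \<in> PF F" and t: "t \<in> p"
  shows "cone_at p t \<in> PF F"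
proof (rule PF_I)
  show "subtree (cone_at p t)" using subtree_cone_at[OF PF_subtree[OF p] t] .
  show "\<forall>\<alpha>. \<exists>s\<in>cone_at p t. \<alpha> < len s"
    using PF_extends_beyond[OF co reg F p t] unfolding cone_at_def by blast
  show "limit_closed (cone_at p t)" using limit_closed_cone_at[OF PF_limit_closed[OF p] PF_in_seqs[OF p t]] .
  show "\<forall>x\<in>cone_at p t. closed_in (deg (cone_at p t) x) (len x)"
  proof
    fix x assume x: "x \<in> cone_at p t"
    hence "x \<in> p" using cone_at_subset by blast
    thus "closed_in (deg (cone_at p t) x) (len x)"
      unfolding deg_cone_at[OF PF_subtree[OF p] t x] by (rule closed_in_restrict_ge[OF PF_deg_closed[OF p]])
  qed
qed (simp_all add: cone_at_splitting_above[OF p t] cone_at_succs[OF p t])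

lemma exists_split_node:
  assumes F: "is_filter F" and r: "r \<in> PF F" and p: "subtree p"
    and w: "w \<in> r" and t: "t \<in> p" "w \<subseteq>\<^sub>m t" "t \<notin> r"
  shows "\<exists>u\<in>r. w \<subseteq>\<^sub>m u \<and> (\<exists>a b. a \<noteq> b \<and> ext1 u a \<in> r \<and> ext1 u b \<in> p)"
proof -
  have ts: "t \<in> seqs" using t(1) p unfolding subtree_def by blast
  have ws: "w \<in> seqs" using PF_in_seqs[OF r w] .
  define j where "j = (LEAST j. restr t j \<notin> r)"
  have "restr t (len t) \<notin> r" using restr_eq_self[OF ts] t(3) by simp
  hence j_out: "restr t j \<notin> r" and jl: "j \<le> len t" unfolding j_def by (rule LeastI, rule Least_le)
  have below: "restr t k \<in> r" if "k < j" for k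
    using not_less_Least[of k "\<lambda>j. restr t j \<notin> r"] that unfolding j_def by blast
  have wr: "restr t (len w) = w" using restr_len_eq_map_le[OF ws ts t(2)] .
  have wj: "len w < j"
  proof (rule ccontr)
    assume "\<not> len w < j"
    hence "restr t j = restr w j" using wr restr_restr_le[of j "len w" t] by simp
    thus False using j_out PF_restr[OF r w, of j] by simp
  qed
  have "\<not> is_limit j"
  proof
    assume lim: "is_limit j"
    have "dom (restr t j) = {..<j}" using dom_restr[OF ts] jl by (simp add: min_absorb2)
    moreover have "\<forall>\<alpha><j. restr (restr t j) \<alpha> \<in> r" using below by (simp add: restr_restr_le less_imp_le)
    ultimately have "restr t j \<in> r" using PF_limit_closed[OF r] lim unfolding limit_closed_def by blast
    thus False using j_out by simp
  qed
  then obtain i where i: "i < j" "\<forall>\<beta>'. i < \<beta>' \<longrightarrow> \<not> \<beta>' < j" using wj unfolding is_limit_def by blast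
  have wi: "len w \<le> i" using i wj by (meson not_le)
  have it: "i < len t" using i(1) jl by simp
  then obtain b where b: "t i = Some b" using dom_seqs[OF ts] by blast
  have "ord_succ i = j" using ord_succ_le[OF i(1)] ord_succ_gt[OF i(1)] i(2) by (meson le_less)
  hence eb: "ext1 (restr t i) b = restr t j" using restr_ord_succ[OF ts it b] by simp
  have u: "restr t i \<in> r" "w \<subseteq>\<^sub>m restr t i"
    using below[OF i(1)] map_le_restr_iff[OF ws wi] t(2) by simp_all
  obtain a where a: "ext1 (restr t i) a \<in> r" using PF_ext1_exists[OF F r u(1)] by blast
  have "ext1 (restr t i) b \<in> p" using eb p t(1) unfolding subtree_def by simp
  moreover have "a \<noteq> b" using a eb j_out by auto
  ultimately show ?thesis using u a by blast
qed

text \<open>If \<open>r\<close> keeps leaving \<open>p\<close>, splitting off \<open>p\<close> along a chain of length \<kappa> produces a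
  node whose \<open>p\<close>-degree contains the splitting levels of the first \<zeta> steps.\<close>

lemma exists_large_degree:
  fixes r :: "('k::wellorder \<rightharpoonup> 'k) set"
  assumes co: "card_order (kord::'k rel)" and reg: "regularCard (kord::'k rel)"
    and F: "is_filter F" and r: "r \<in> PF F" and p: "subtree p"
    and leaves: "\<forall>w\<in>r. \<exists>t\<in>p. w \<subseteq>\<^sub>m t \<and> t \<notin> r"
  shows "\<exists>v\<in>r. \<not> otp_less (deg p v) \<zeta>"
proof -
  have "\<forall>w\<in>r. \<exists>u a b. u \<in> r \<and> w \<subseteq>\<^sub>m u \<and> a \<noteq> b \<and> ext1 u a \<in> r \<and> ext1 u b \<in> p"
    using exists_split_node[OF F r p] leaves by blast
  then obtain U A A' where split: "\<And>w. w \<in> r \<Longrightarrow>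
      U w \<in> r \<and> w \<subseteq>\<^sub>m U w \<and> A w \<noteq> A' w \<and> ext1 (U w) (A w) \<in> r \<and> ext1 (U w) (A' w) \<in> p"
    by metis
  define N where "N = (\<lambda>w. ext1 (U w) (A w))"
  have N: "\<forall>w\<in>r. N w \<in> r \<and> w \<subseteq>\<^sub>m N w"
  proof
    fix w assume "w \<in> r"
    hence "U w \<in> r" "w \<subseteq>\<^sub>m U w" "ext1 (U w) (A w) \<in> r" using split by blast+
    thus "N w \<in> r \<and> w \<subseteq>\<^sub>m N w" using map_le_ext1[OF PF_in_seqs[OF r]] map_le_trans unfolding N_def by blast
  qed
  obtain w0 where "w0 \<in> r" using PF_nonempty[OF r] by blast
  then obtain B where B: "\<forall>\<xi>::'k. B \<xi> \<in> r \<and> w0 \<subseteq>\<^sub>m B \<xi> \<and> (\<forall>\<eta><\<xi>. N (B \<eta>) \<subseteq>\<^sub>m B \<xi>)"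
    using kappa_chain[OF co reg PF_subtree[OF r] PF_limit_closed[OF r] _ N] by blast
  define \<pi> where "\<pi> = (\<lambda>\<xi>. len (U (B \<xi>)))"
  have UB: "U (B \<xi>) \<in> r" for \<xi> using split B by blast
  have N_seqs: "N (B \<xi>) \<in> seqs" and len_N: "\<pi> \<xi> < len (N (B \<xi>))" for \<xi>
    using PF_ext1_in_seqs[OF r UB] PF_len_less_ext1[OF r UB] unfolding N_def \<pi>_def by blast+
  have \<pi>_deg: "\<pi> \<xi> \<in> deg p (N (B \<xi>))" for \<xi>
  proof -
    have "restr (N (B \<xi>)) (\<pi> \<xi>) = U (B \<xi>)" "N (B \<xi>) (\<pi> \<xi>) = Some (A (B \<xi>))"
      unfolding N_def \<pi>_def using restr_ext1[OF PF_in_seqs[OF r UB]] by simp_all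
    moreover have "A' (B \<xi>) \<in> succs p (U (B \<xi>))" "A (B \<xi>) \<noteq> A' (B \<xi>)"
      using split B unfolding succs_def by blast+
    ultimately show ?thesis using deg_iff_succs[OF p N_seqs] len_N by auto
  qed
  have "\<pi> ` {..<\<zeta>} \<subseteq> deg p (B \<zeta>)"
  proof
    fix x assume "x \<in> \<pi> ` {..<\<zeta>}"
    then obtain \<xi> where "\<xi> < \<zeta>" "x = \<pi> \<xi>" by blast
    hence "N (B \<xi>) \<subseteq>\<^sub>m B \<zeta>" using B by blast
    hence "deg p (N (B \<xi>)) \<subseteq> deg p (B \<zeta>)" using deg_map_le N_seqs B PF_in_seqs[OF r] by blast
    thus "x \<in> deg p (B \<zeta>)" using \<pi>_deg \<open>x = \<pi> \<xi>\<close> by blast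
  qed
  moreover have "strict_mono_on {..<\<zeta>} \<pi>"
  proof (rule strict_mono_onI)
    fix \<xi> \<eta> assume "\<xi> \<in> {..<\<zeta>}" "\<eta> \<in> {..<\<zeta>}" "\<xi> < \<eta>"
    hence "N (B \<xi>) \<subseteq>\<^sub>m B \<eta>" using B by blast
    hence "len (N (B \<xi>)) \<le> len (B \<eta>)" using map_le_len N_seqs B PF_in_seqs[OF r] by blast
    moreover have "len (B \<eta>) \<le> \<pi> \<eta>" unfolding \<pi>_def using map_le_len split B PF_in_seqs[OF r] by blast
    ultimately show "\<pi> \<xi> < \<pi> \<eta>" using len_N[of \<xi>] by simp
  qed
  ultimately have "\<not> otp_less (deg p (B \<zeta>)) \<zeta>" by (rule not_otp_less_if_strict_mono_on[rotated])
  thus ?thesis using B by blast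
qed

lemma succs_mono: "q \<subseteq> p \<Longrightarrow> succs q t \<subseteq> succs p t"
  unfolding succs_def by blast

subsection \<open>Fusion\<close>

locale fusion =
  fixes F :: "'k::wellorder set set" and p :: "('k \<rightharpoonup> 'k) set" and \<zeta> :: 'k
    and d :: "('k \<rightharpoonup> 'k) \<Rightarrow> ('k \<rightharpoonup> 'k) set"
  assumes filter: "is_filter F" and p: "p \<in> PF F"
    and d_PF: "t \<in> p \<Longrightarrow> d t \<in> PF F" and d_cone: "t \<in> p \<Longrightarrow> d t \<subseteq> cone_at p t"
begin

definition small :: "('k \<rightharpoonup> 'k) \<Rightarrow> bool" where
  "small x \<longleftrightarrow> otp_less (deg p x) \<zeta>"

definition trunk :: "('k \<rightharpoonup> 'k) set" where
  "trunk = {x\<in>p. \<forall>i<len x. small (restr x i)}"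

definition frontier :: "('k \<rightharpoonup> 'k) set" where
  "frontier = {s\<in>trunk. \<not> small s}"

definition fused :: "('k \<rightharpoonup> 'k) set" where
  "fused = trunk \<union> \<Union>{d (ext1 s \<alpha>) | s \<alpha>. s \<in> frontier \<and> ext1 s \<alpha> \<in> p}"

lemma d_subset_p: "t \<in> p \<Longrightarrow> d t \<subseteq> p"
  using d_cone cone_at_subset by blast

lemma small_map_le: "x \<in> seqs \<Longrightarrow> y \<in> seqs \<Longrightarrow> x \<subseteq>\<^sub>m y \<Longrightarrow> small y \<Longrightarrow> small x"
  unfolding small_def by (meson deg_map_le otp_less_subset)

lemma small_restr: "x \<in> seqs \<Longrightarrow> small x \<Longrightarrow> small (restr x i)"
  using small_map_le[OF restr_in_seqs _ restr_map_le] by blast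

lemma trunk_subset: "trunk \<subseteq> p"
  unfolding trunk_def by blast

lemma frontier_subset: "frontier \<subseteq> p"
  unfolding frontier_def trunk_def by blast

lemma small_in_trunk: "x \<in> p \<Longrightarrow> small x \<Longrightarrow> x \<in> trunk"
  unfolding trunk_def using small_restr PF_in_seqs[OF p] by blast

lemma trunk_restr:
  assumes "x \<in> trunk" shows "restr x i \<in> trunk"
proof -
  have xp: "x \<in> p" and xs: "x \<in> seqs" using assms trunk_subset PF_in_seqs[OF p] by blast+
  have "small (restr (restr x i) j)" if "j < len (restr x i)" for j
    using that assms unfolding trunk_def len_restr[OF xs] restr_restr by (simp add: min_absorb2 less_imp_le)
  thus ?thesis unfolding trunk_def using PF_restr[OF p xp] by blast
qed

lemma map_le_frontier_in_trunk:
  assumes s: "s \<in> frontier" and x: "x \<in> p" "x \<subseteq>\<^sub>m s"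
  shows "x \<in> trunk"
proof -
  have "s \<in> seqs" "x \<in> seqs" using s x frontier_subset PF_in_seqs[OF p] by blast+
  hence "restr s (len x) = x" using restr_len_eq_map_le x(2) by blast
  moreover have "restr s (len x) \<in> trunk" using trunk_restr s unfolding frontier_def by blast
  ultimately show ?thesis by simp
qed

lemma frontier_below:
  assumes v: "v \<in> p" and not_small: "\<not> small v"
  shows "\<exists>s\<in>frontier. s \<subseteq>\<^sub>m v"
proof -
  have vs: "v \<in> seqs" using PF_in_seqs[OF p v] .
  define j where "j = (LEAST j. \<not> small (restr v j))"
  have "\<not> small (restr v (len v))" using not_small restr_eq_self[OF vs] by simp
  hence j: "\<not> small (restr v j)" "j \<le> len v" unfolding j_def by (rule LeastI, rule Least_le)
  have "small (restr v i)" if "i < j" for i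
    using not_less_Least[of i "\<lambda>j. \<not> small (restr v j)"] that unfolding j_def by blast
  hence "restr v j \<in> frontier"
    using j PF_restr[OF p v] unfolding frontier_def trunk_def
    by (simp add: len_restr[OF vs] restr_restr min_absorb2 less_imp_le)
  thus ?thesis using restr_map_le by blast
qed

lemma frontier_below_non_trunk:
  assumes v: "v \<in> p" "v \<notin> trunk"
  shows "\<exists>s\<in>frontier. s \<subseteq>\<^sub>m v \<and> len s < len v"
proof -
  obtain i where i: "i < len v" "\<not> small (restr v i)" using v unfolding trunk_def by blast
  then obtain s where s: "s \<in> frontier" "s \<subseteq>\<^sub>m restr v i"
    using frontier_below PF_restr[OF p v(1)] by blast
  have vs: "v \<in> seqs" and ss: "s \<in> seqs" using v s frontier_subset PF_in_seqs[OF p] by blast+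
  have "len s \<le> len (restr v i)" using map_le_len[OF ss restr_in_seqs[OF vs] s(2)] .
  hence "len s < len v" using len_restr[OF vs] i(1) by simp
  moreover have "s \<subseteq>\<^sub>m v" using s(2) restr_map_le map_le_trans by blast
  ultimately show ?thesis using s(1) by blast
qed

lemma frontier_unique:
  assumes s: "s \<in> frontier" "s' \<in> frontier" and x: "x \<in> seqs" "s \<subseteq>\<^sub>m x" "s' \<subseteq>\<^sub>m x"
  shows "s = s'"
proof -
  have "a = b" if a: "a \<in> frontier" and b: "b \<in> frontier" and ab: "a \<subseteq>\<^sub>m b" for a b
  proof (rule ccontr)
    assume "a \<noteq> b"
    have as: "a \<in> seqs" and bs: "b \<in> seqs" using a b frontier_subset PF_in_seqs[OF p] by blast+
    have a_restr: "restr b (len a) = a" using restr_len_eq_map_le[OF as bs ab] .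
    have "len a \<noteq> len b" using a_restr restr_eq_self[OF bs] \<open>a \<noteq> b\<close> by (metis order_refl)
    hence "len a < len b" using map_le_len[OF as bs ab] by simp
    hence "small (restr b (len a))" using b unfolding frontier_def trunk_def by blast
    thus False using a a_restr unfolding frontier_def by simp
  qed
  moreover have "s \<in> seqs" "s' \<in> seqs" using s frontier_subset PF_in_seqs[OF p] by blast+
  ultimately show ?thesis using map_le_comparable[OF _ _ x] s by metis
qed

lemma self_in_d: assumes "t \<in> p" shows "t \<in> d t"
proof -
  obtain z where z: "z \<in> d t" "len t < len z" using PF_unbounded[OF d_PF[OF assms]] by blast
  have zs: "z \<in> seqs" and ts: "t \<in> seqs" using z(1) d_subset_p assms PF_in_seqs[OF p] by blast+
  have "\<not> z \<subseteq>\<^sub>m t" using map_le_len[OF zs ts] z(2) by (meson leD)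
  hence "t \<subseteq>\<^sub>m z" using z(1) d_cone[OF assms] unfolding cone_at_def by blast
  hence "t = restr z (len t)" using restr_len_eq_map_le[OF ts zs] by simp
  thus ?thesis using PF_restr[OF d_PF[OF assms] z(1)] by metis
qed

lemma d_subset_fused: "s \<in> frontier \<Longrightarrow> ext1 s \<alpha> \<in> p \<Longrightarrow> d (ext1 s \<alpha>) \<subseteq> fused"
  unfolding fused_def by blast

lemma trunk_subset_fused: "trunk \<subseteq> fused"
  unfolding fused_def by blast

lemma fused_subset: "fused \<subseteq> p"
  unfolding fused_def using trunk_subset d_subset_p by blast

lemma fused_cases:
  assumes "x \<in> fused"
  obtains "x \<in> trunk"
    | s \<gamma> where "s \<in> frontier" "ext1 s \<gamma> \<in> p" "ext1 s \<gamma> \<subseteq>\<^sub>m x" "x \<in> d (ext1 s \<gamma>)"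
proof (cases "x \<in> trunk")
  case False
  then obtain s \<alpha> where s: "s \<in> frontier" "ext1 s \<alpha> \<in> p" "x \<in> d (ext1 s \<alpha>)"
    using assms unfolding fused_def by blast
  let ?e = "ext1 s \<alpha>"
  have sp: "s \<in> p" using s frontier_subset by blast
  have xp: "x \<in> p" and xs: "x \<in> seqs" and es: "?e \<in> seqs" and ss: "s \<in> seqs"
    using s d_subset_p sp PF_in_seqs[OF p] by blast+
  have "?e \<subseteq>\<^sub>m x"
  proof (rule ccontr)
    assume "\<not> ?e \<subseteq>\<^sub>m x"
    hence xe: "x \<subseteq>\<^sub>m ?e" using s(3) d_cone[OF s(2)] unfolding cone_at_def by blast
    hence x_restr: "x = restr ?e (len x)" using restr_len_eq_map_le[OF xs es] by simp
    have "len x \<noteq> len ?e" using x_restr restr_eq_self[OF es] \<open>\<not> ?e \<subseteq>\<^sub>m x\<close> by force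
    hence "len x < ord_succ (len s)" using map_le_len[OF xs es xe] PF_len_ext1[OF p sp] by simp
    hence "len x \<le> len s" using less_ord_succ_iff[OF PF_len_less_ext1[OF p sp]] by blast
    hence "x = restr s (len x)" using x_restr restr_ext1[OF ss] restr_restr_le by metis
    hence "x \<subseteq>\<^sub>m s" using restr_map_le by metis
    thus False using map_le_frontier_in_trunk[OF s(1) xp] False by blast
  qed
  thus thesis using that(2) s by blast
qed

lemma fused_in_d:
  assumes x: "x \<in> fused" and s: "s \<in> frontier" and ex: "ext1 s \<gamma> \<subseteq>\<^sub>m x"
  shows "x \<in> d (ext1 s \<gamma>)"
proof -
  have sp: "s \<in> p" using s frontier_subset by blast
  have xs: "x \<in> seqs" and ss: "s \<in> seqs" using x sp fused_subset PF_in_seqs[OF p] by blast+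
  have sx: "s \<subseteq>\<^sub>m x" using map_le_trans[OF map_le_ext1[OF ss] ex] .
  have val: "x (len s) = Some \<beta>" if "ext1 s \<beta> \<subseteq>\<^sub>m x" for \<beta>
    using that ext1_at_len[of s \<beta>] unfolding map_le_def by (metis domIff option.distinct(1))
  have "x \<notin> trunk"
  proof
    assume "x \<in> trunk"
    moreover have "len s < len x"
      using map_le_len[OF PF_ext1_in_seqs[OF p sp] xs ex] PF_len_less_ext1[OF p sp, of \<gamma>]
      by (rule less_le_trans[rotated])
    ultimately have "small (restr x (len s))" unfolding trunk_def by blast
    thus False using s restr_len_eq_map_le[OF ss xs sx] unfolding frontier_def by simp
  qed
  with x obtain s' \<gamma>' where s': "s' \<in> frontier" "ext1 s' \<gamma>' \<subseteq>\<^sub>m x" "x \<in> d (ext1 s' \<gamma>')"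
    by (cases rule: fused_cases) auto
  have "s' \<subseteq>\<^sub>m x"
    using map_le_trans[OF map_le_ext1 s'(2)] s'(1) frontier_subset PF_in_seqs[OF p] by blast
  hence "s' = s" using frontier_unique[OF s'(1) s xs _ sx] by blast
  hence "\<gamma>' = \<gamma>" using val[OF ex] val[of \<gamma>'] s'(2) by simp
  thus ?thesis using s' \<open>s' = s\<close> by simp
qed

lemma succs_fused_trunk:
  assumes x: "x \<in> trunk" shows "succs fused x = succs p x"
proof
  show "succs fused x \<subseteq> succs p x" using succs_mono[OF fused_subset] .
  show "succs p x \<subseteq> succs fused x"
  proof
    fix \<beta> assume "\<beta> \<in> succs p x"
    hence e: "ext1 x \<beta> \<in> p" unfolding succs_def by simp
    have xp: "x \<in> p" and xs: "x \<in> seqs" using x trunk_subset PF_in_seqs[OF p] by blast+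
    have "ext1 x \<beta> \<in> fused"
    proof (cases "small x")
      case True
      have "small (restr (ext1 x \<beta>) i)" if "i < len (ext1 x \<beta>)" for i
      proof -
        have "i \<le> len x"
          using that less_ord_succ_iff[OF PF_len_less_ext1[OF p xp]] PF_len_ext1[OF p xp] by simp
        hence "restr (ext1 x \<beta>) i = restr x i" using restr_ext1[OF xs] restr_restr_le by metis
        thus ?thesis using small_restr[OF xs True] by simp
      qed
      thus ?thesis using e trunk_subset_fused unfolding trunk_def by blast
    next
      case False
      hence "x \<in> frontier" using x unfolding frontier_def by blast
      thus ?thesis using d_subset_fused self_in_d[OF e] e by blast
    qed
    thus "\<beta> \<in> succs fused x" unfolding succs_def by simp
  qed
qed

lemma succs_fused_above:
  assumes s: "s \<in> frontier" and e: "ext1 s \<gamma> \<in> p" and ex: "ext1 s \<gamma> \<subseteq>\<^sub>m x" and x: "x \<in> fused"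
  shows "succs fused x = succs (d (ext1 s \<gamma>)) x"
proof
  show "succs (d (ext1 s \<gamma>)) x \<subseteq> succs fused x" using succs_mono[OF d_subset_fused[OF s e]] .
  show "succs fused x \<subseteq> succs (d (ext1 s \<gamma>)) x"
  proof
    fix \<beta> assume "\<beta> \<in> succs fused x"
    hence "ext1 x \<beta> \<in> fused" unfolding succs_def by simp
    moreover have "ext1 s \<gamma> \<subseteq>\<^sub>m ext1 x \<beta>"
      using map_le_trans[OF ex map_le_ext1] x fused_subset PF_in_seqs[OF p] by blast
    ultimately have "ext1 x \<beta> \<in> d (ext1 s \<gamma>)" using fused_in_d[OF _ s] by blast
    thus "\<beta> \<in> succs (d (ext1 s \<gamma>)) x" unfolding succs_def by simp
  qed
qed

lemma subtree_fused: "subtree fused"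
  unfolding subtree_def
proof (intro conjI ballI allI)
  obtain t where "t \<in> p" using PF_nonempty[OF p] by blast
  hence "trunk \<noteq> {}" using frontier_below_non_trunk unfolding frontier_def by blast
  thus "fused \<noteq> {}" using trunk_subset_fused by blast
  show "fused \<subseteq> seqs" using fused_subset PF_in_seqs[OF p] by blast
  fix x i assume "x \<in> fused"
  thus "restr x i \<in> fused"
  proof (cases rule: fused_cases)
    case 1 thus ?thesis using trunk_restr trunk_subset_fused by blast
  next
    case (2 s \<gamma>) thus ?thesis using PF_restr[OF d_PF] d_subset_fused by blast
  qed
qed

lemma deg_fused_trunk:
  assumes x: "x \<in> trunk" shows "deg fused x = deg p x"
proof -
  have xs: "x \<in> seqs" using x trunk_subset PF_in_seqs[OF p] by blast
  have "i \<in> deg fused x \<longleftrightarrow> i \<in> deg p x" for i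
  proof (cases "i < len x")
    case True
    have "succs fused (restr x i) = succs p (restr x i)" using succs_fused_trunk trunk_restr x by blast
    thus ?thesis by (rule deg_cong[OF subtree_fused PF_subtree[OF p] xs])
  qed (auto dest: deg_less_len)
  thus ?thesis by blast
qed

lemma deg_fused_above:
  assumes s: "s \<in> frontier" and e: "ext1 s \<gamma> \<in> p" and ex: "ext1 s \<gamma> \<subseteq>\<^sub>m x" and x: "x \<in> d (ext1 s \<gamma>)"
  shows "deg fused x = {i\<in>deg p x. i \<le> len s} \<union> {i\<in>deg (d (ext1 s \<gamma>)) x. len s < i}"
proof -
  let ?e = "ext1 s \<gamma>"
  have sp: "s \<in> p" using s frontier_subset by blast
  have x_fused: "x \<in> fused" using x d_subset_fused[OF s e] by blast
  have xs: "x \<in> seqs" and ss: "s \<in> seqs" and es: "?e \<in> seqs"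
    using x_fused sp e fused_subset PF_in_seqs[OF p] by blast+
  have sx: "s \<subseteq>\<^sub>m x" using map_le_trans[OF map_le_ext1[OF ss] ex] .
  have below: "i \<in> deg fused x \<longleftrightarrow> i \<in> deg p x" if "i \<le> len s" for i
  proof -
    have "restr x i \<subseteq>\<^sub>m s"
      using that restr_len_eq_map_le[OF ss xs sx] restr_mono[OF that, of x] by simp
    hence "restr x i \<in> trunk"
      using map_le_frontier_in_trunk[OF s] PF_restr[OF p] x d_subset_p[OF e] by blast
    hence "succs fused (restr x i) = succs p (restr x i)" by (rule succs_fused_trunk)
    thus ?thesis by (rule deg_cong[OF subtree_fused PF_subtree[OF p] xs])
  qed
  have above: "i \<in> deg fused x \<longleftrightarrow> i \<in> deg (d ?e) x" if "len s < i" for i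
  proof -
    have "len ?e \<le> i" using that PF_len_ext1[OF p sp] ord_succ_le by simp
    hence "?e \<subseteq>\<^sub>m restr x i" using map_le_restr_iff[OF es] ex by blast
    moreover have "restr x i \<in> fused" using subtree_fused x_fused unfolding subtree_def by blast
    ultimately have "succs fused (restr x i) = succs (d ?e) (restr x i)" by (rule succs_fused_above[OF s e])
    thus ?thesis by (rule deg_cong[OF subtree_fused PF_subtree[OF d_PF[OF e]] xs])
  qed
  have "i \<in> deg fused x \<longleftrightarrow> i \<in> {i\<in>deg p x. i \<le> len s} \<union> {i\<in>deg (d ?e) x. len s < i}" for i
  proof (cases "i \<le> len s")
    case True thus ?thesis using below[OF True] by auto
  next
    case False thus ?thesis using above[of i] by auto
  qed
  thus ?thesis by blast
qed

lemma limit_closed_fused: "limit_closed fused"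
  unfolding limit_closed_def
proof (intro allI impI)
  fix \<delta> x assume lim: "is_limit \<delta>" and dx: "dom x = {..<\<delta>}" and below: "\<forall>\<alpha><\<delta>. restr x \<alpha> \<in> fused"
  have xp: "x \<in> p" using PF_limit_closed[OF p] lim dx below fused_subset unfolding limit_closed_def by blast
  have xs: "x \<in> seqs" using dx by (rule seqsI)
  show "x \<in> fused"
  proof (cases "x \<in> trunk")
    case True thus ?thesis using trunk_subset_fused by blast
  next
    case False
    then obtain s where s: "s \<in> frontier" "s \<subseteq>\<^sub>m x" "len s < len x"
      using frontier_below_non_trunk[OF xp] by blast
    have ss: "s \<in> seqs" using s(1) frontier_subset PF_in_seqs[OF p] by blast
    obtain \<gamma> where \<gamma>: "x (len s) = Some \<gamma>" using s(3) dom_seqs[OF xs] by blast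
    let ?e = "ext1 s \<gamma>"
    have e_restr: "restr x (ord_succ (len s)) = ?e"
      using restr_ord_succ[OF xs s(3) \<gamma>] restr_len_eq_map_le[OF ss xs s(2)] by simp
    hence e: "?e \<in> p" using PF_restr[OF p xp] by metis
    have "restr x \<alpha> \<in> d ?e" if "\<alpha> < \<delta>" for \<alpha>
    proof (cases "ord_succ (len s) \<le> \<alpha>")
      case True
      hence "?e \<subseteq>\<^sub>m restr x \<alpha>" using e_restr restr_mono by metis
      thus ?thesis using fused_in_d[OF _ s(1)] below that by blast
    next
      case False
      hence "restr x \<alpha> = restr ?e \<alpha>" using e_restr restr_restr_le by (metis nle_le)
      thus ?thesis using PF_restr[OF d_PF[OF e] self_in_d[OF e]] by simp
    qed
    hence "x \<in> d ?e" using PF_limit_closed[OF d_PF[OF e]] lim dx unfolding limit_closed_def by blast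
    thus ?thesis using d_subset_fused[OF s(1) e] by blast
  qed
qed

lemma splitting_above_in_fused:
  assumes "q \<in> PF F" and "q \<subseteq> fused" and "x \<in> q"
  shows "\<exists>t. x \<subseteq>\<^sub>m t \<and> t \<in> fused \<and> succs fused t \<in> F"
proof -
  obtain t where "x \<subseteq>\<^sub>m t" "t \<in> q" "succs q t \<in> F" using PF_splitting_above[OF assms(1,3)] by blast
  thus ?thesis using filter_mono[OF filter _ succs_mono[OF assms(2)]] assms(2) by blast
qed

lemma frontier_splitting_above:
  assumes s: "s \<in> frontier" shows "\<exists>t. s \<subseteq>\<^sub>m t \<and> t \<in> fused \<and> succs fused t \<in> F"
proof -
  have sp: "s \<in> p" using s frontier_subset by blast
  obtain \<beta> where e: "ext1 s \<beta> \<in> p" using PF_ext1_exists[OF filter p sp] by blast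
  obtain t where "ext1 s \<beta> \<subseteq>\<^sub>m t" "t \<in> fused" "succs fused t \<in> F"
    using splitting_above_in_fused[OF d_PF[OF e] d_subset_fused[OF s e] self_in_d[OF e]] by blast
  thus ?thesis using map_le_trans[OF map_le_ext1[OF PF_in_seqs[OF p sp]]] by blast
qed

lemma trunk_splitting_above:
  assumes x: "x \<in> trunk" shows "\<exists>t. x \<subseteq>\<^sub>m t \<and> t \<in> fused \<and> succs fused t \<in> F"
proof -
  have xs: "x \<in> seqs" using x trunk_subset PF_in_seqs[OF p] by blast
  obtain t where t: "x \<subseteq>\<^sub>m t" "t \<in> p" "succs p t \<in> F"
    using PF_splitting_above[OF p] x trunk_subset by blast
  show ?thesis
  proof (cases "t \<in> trunk")
    case True thus ?thesis using t succs_fused_trunk trunk_subset_fused by auto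
  next
    case False
    then obtain s where s: "s \<in> frontier" "s \<subseteq>\<^sub>m t" using frontier_below_non_trunk[OF t(2)] by blast
    have ss: "s \<in> seqs" and ts: "t \<in> seqs" using s(1) t(2) frontier_subset PF_in_seqs[OF p] by blast+
    have "x \<subseteq>\<^sub>m s"
    proof (rule ccontr)
      assume "\<not> x \<subseteq>\<^sub>m s"
      hence "s \<subseteq>\<^sub>m x" "s \<noteq> x" using map_le_comparable[OF xs ss ts t(1) s(2)] by auto
      hence "len s < len x"
        using map_le_len[OF ss xs] restr_len_eq_map_le[OF ss xs] restr_eq_self[OF xs]
        by (metis order.not_eq_order_implies_strict)
      hence "small (restr x (len s))" using x unfolding trunk_def by blast
      thus False using s(1) restr_len_eq_map_le[OF ss xs \<open>s \<subseteq>\<^sub>m x\<close>] unfolding frontier_def by simp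
    qed
    thus ?thesis using frontier_splitting_above[OF s(1)] map_le_trans by blast
  qed
qed

lemma fused_unbounded: "\<exists>x\<in>fused. \<alpha> < len x"
proof -
  obtain t where t: "t \<in> p" "\<alpha> < len t" using PF_unbounded[OF p] by blast
  show ?thesis
  proof (cases "t \<in> trunk")
    case True thus ?thesis using t trunk_subset_fused by blast
  next
    case False
    then obtain s where s: "s \<in> frontier" using frontier_below_non_trunk[OF t(1)] by blast
    then obtain \<beta> where e: "ext1 s \<beta> \<in> p" using PF_ext1_exists[OF filter p] frontier_subset by blast
    obtain z where "z \<in> d (ext1 s \<beta>)" "\<alpha> < len z" using PF_unbounded[OF d_PF[OF e]] by blast
    thus ?thesis using d_subset_fused[OF s e] by blast
  qed
qed

lemma fused_splitting_above:
  assumes "x \<in> fused" shows "\<exists>t. x \<subseteq>\<^sub>m t \<and> t \<in> fused \<and> succs fused t \<in> F"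
  using assms
proof (cases rule: fused_cases)
  case 1 thus ?thesis by (rule trunk_splitting_above)
next
  case (2 s \<gamma>) thus ?thesis using splitting_above_in_fused[OF d_PF d_subset_fused] by blast
qed

lemma fused_succs:
  assumes x: "x \<in> fused" shows "(\<exists>\<alpha>. succs fused x = {\<alpha>}) \<or> succs fused x \<in> F"
  using x
proof (cases rule: fused_cases)
  case 1
  hence "x \<in> p" using trunk_subset by blast
  thus ?thesis using succs_fused_trunk[OF 1] PF_succs[OF p] by simp
next
  case (2 s \<gamma>) thus ?thesis using succs_fused_above[OF _ _ _ x] PF_succs[OF d_PF] by metis
qed

lemma fused_deg_closed:
  assumes "x \<in> fused" shows "closed_in (deg fused x) (len x)"
  using assms
proof (cases rule: fused_cases)
  case 1
  hence "x \<in> p" using trunk_subset by blast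
  thus ?thesis using deg_fused_trunk[OF 1] PF_deg_closed[OF p] by simp
next
  case (2 s \<gamma>)
  have "x \<in> p" using 2 d_subset_p by blast
  thus ?thesis unfolding deg_fused_above[OF 2]
    by (intro closed_in_glue PF_deg_closed[OF p] PF_deg_closed[OF d_PF[OF 2(2)] 2(4)])
qed

lemma fused_PF: "fused \<in> PF F"
  by (rule PF_I)
    (simp_all add: subtree_fused fused_unbounded fused_splitting_above fused_succs limit_closed_fused
      fused_deg_closed)

lemma fused_le_zeta: "le_zeta \<zeta> p fused"
  unfolding le_zeta_def le_P_def using fused_subset small_in_trunk trunk_subset_fused
  unfolding small_def by blast

lemma compatible_above_frontier:
  fixes r :: "('k \<rightharpoonup> 'k) set"
  assumes co: "card_order (kord::'k rel)" and reg: "regularCard (kord::'k rel)"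
    and r: "r \<in> PF F" "r \<subseteq> fused" and v: "v \<in> r" "\<not> small v"
  shows "\<exists>t\<in>p. \<exists>u\<in>PF F. u \<subseteq> r \<and> u \<subseteq> d t"
proof -
  have vp: "v \<in> p" using v r fused_subset by blast
  obtain s where s: "s \<in> frontier" "s \<subseteq>\<^sub>m v" using frontier_below[OF vp v(2)] by blast
  obtain \<beta> where w: "ext1 v \<beta> \<in> r" using PF_ext1_exists[OF filter r(1) v(1)] by blast
  let ?w = "ext1 v \<beta>"
  have ss: "s \<in> seqs" and vs: "v \<in> seqs" and ws: "?w \<in> seqs"
    using s(1) vp w r fused_subset frontier_subset PF_in_seqs[OF p] by blast+
  have sw: "s \<subseteq>\<^sub>m ?w" using map_le_trans[OF s(2) map_le_ext1[OF vs]] .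
  have "len s < len ?w"
    using map_le_len[OF ss vs s(2)] PF_len_less_ext1[OF r(1) v(1)] by (rule le_less_trans)
  then obtain \<gamma> where \<gamma>: "?w (len s) = Some \<gamma>" using dom_seqs[OF ws] by blast
  let ?e = "ext1 s \<gamma>"
  have e_restr: "restr ?w (ord_succ (len s)) = ?e"
    using restr_ord_succ[OF ws \<open>len s < len ?w\<close> \<gamma>] restr_len_eq_map_le[OF ss ws sw] by simp
  have "?w \<in> p" using w r(2) fused_subset by blast
  hence e: "?e \<in> p" using PF_restr[OF p, of ?w "ord_succ (len s)"] e_restr by simp
  have ew: "?e \<subseteq>\<^sub>m ?w" using restr_map_le[of ?w "ord_succ (len s)"] e_restr by simp
  have "cone_at r ?w \<subseteq> d ?e"
  proof (rule cone_at_subsetI[OF PF_subtree[OF d_PF[OF e]]])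
    show "?w \<in> d ?e" using fused_in_d[OF _ s(1) ew] w r(2) by blast
    show "r \<subseteq> seqs" using PF_in_seqs[OF r(1)] by blast
    show "\<forall>z\<in>r. ?w \<subseteq>\<^sub>m z \<longrightarrow> z \<in> d ?e"
    proof (intro ballI impI)
      fix z assume z: "z \<in> r" "?w \<subseteq>\<^sub>m z"
      have "z \<in> fused" using z(1) r(2) by blast
      moreover have "?e \<subseteq>\<^sub>m z" using ew z(2) by (rule map_le_trans)
      ultimately show "z \<in> d ?e" using fused_in_d[OF _ s(1)] by blast
    qed
  qed
  moreover have "cone_at r ?w \<subseteq> r" by (rule cone_at_subset)
  ultimately show ?thesis using cone_at_PF[OF co reg filter r(1) w] e by blast
qed

lemma fused_predense:
  assumes co: "card_order (kord::'k rel)" and reg: "regularCard (kord::'k rel)"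
  shows "predense_above (PF F) (d ` p) fused"
  unfolding predense_above_def le_P_def compatible_def
proof (intro ballI impI)
  fix r assume r: "r \<in> PF F" "r \<subseteq> fused"
  show "\<exists>t\<in>d ` p. \<exists>u\<in>PF F. u \<subseteq> r \<and> u \<subseteq> t"
  proof (cases "\<exists>w\<in>r. \<forall>z\<in>p. w \<subseteq>\<^sub>m z \<longrightarrow> z \<in> r")
    case True
    then obtain w where w: "w \<in> r" "\<forall>z\<in>p. w \<subseteq>\<^sub>m z \<longrightarrow> z \<in> r" by blast
    have wp: "w \<in> p" using w r fused_subset by blast
    have "p \<subseteq> seqs" using PF_in_seqs[OF p] by blast
    hence "d w \<subseteq> r" using cone_at_subsetI[OF PF_subtree[OF r(1)] w(1) _ w(2)] d_cone[OF wp] by blast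
    moreover have "d w \<in> d ` p" using wp by blast
    ultimately show ?thesis using d_PF[OF wp] by blast
  next
    case False
    hence "\<forall>w\<in>r. \<exists>t\<in>p. w \<subseteq>\<^sub>m t \<and> t \<notin> r" by blast
    then obtain v where "v \<in> r" "\<not> small v"
      using exists_large_degree[OF co reg filter r(1) PF_subtree[OF p]] unfolding small_def by blast
    then obtain t u where "t \<in> p" "u \<in> PF F" "u \<subseteq> r" "u \<subseteq> d t"
      using compatible_above_frontier[OF co reg r] by blast
    moreover have "d t \<in> d ` p" using \<open>t \<in> p\<close> by blast
    ultimately show ?thesis by blast
  qed
qed

end

lemma dense_below_cones:
  fixes p :: "('k::wellorder \<rightharpoonup> 'k) set"
  assumes co: "card_order (kord::'k rel)" and reg: "regularCard (kord::'k rel)"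
    and F: "is_filter F" and D: "dense_in (PF F) D" and p: "p \<in> PF F"
  shows "\<exists>d. \<forall>t\<in>p. d t \<in> D \<and> d t \<subseteq> cone_at p t"
proof -
  have "\<exists>d'\<in>D. d' \<subseteq> cone_at p t" if "t \<in> p" for t
    using D cone_at_PF[OF co reg F p that] unfolding dense_in_def le_P_def by blast
  hence "\<forall>t\<in>p. \<exists>d'. d' \<in> D \<and> d' \<subseteq> cone_at p t" by blast
  thus ?thesis by (rule bchoice)
qed

lemma card_of_image_le_kord:
  fixes p :: "('k::wellorder \<rightharpoonup> 'k) set"
  assumes "|seqs :: ('k \<rightharpoonup> 'k) set| =o (kord :: 'k rel)" and "p \<subseteq> seqs"
  shows "|f ` p| \<le>o (kord :: 'k rel)"
proof -
  have "|f ` p| \<le>o |seqs :: ('k \<rightharpoonup> 'k) set|"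
    by (rule ordLeq_transitive[OF card_of_image card_of_mono1[OF assms(2)]])
  thus ?thesis using assms(1) by (rule ordLeq_ordIso_trans)
qed

theorem lemma4p8:
  fixes F :: "('k::wellorder) set set"
  assumes "card_order (kord :: 'k rel)"
    and "Cinfinite (kord :: 'k rel)"
    and "regularCard (kord :: 'k rel)"
    and "(card_of (seqs :: ('k \<rightharpoonup> 'k) set), kord :: 'k rel) \<in> ordIso"
    and "is_filter F"
    and "lt_kappa_complete F"
  shows "\<forall>D p \<zeta>. dense_in (PF F) D \<longrightarrow> p \<in> PF F \<longrightarrow>
           (\<exists>q\<in>PF F. le_zeta \<zeta> p q \<and>
              (\<exists>D'. D' \<subseteq> D \<and> (card_of D', kord :: 'k rel) \<in> ordLeq \<and> predense_above (PF F) D' q))"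
proof (intro allI impI)
  fix D p \<zeta> assume D: "dense_in (PF F) D" and p: "p \<in> PF F"
  obtain d where d: "\<forall>t\<in>p. d t \<in> D \<and> d t \<subseteq> cone_at p t"
    using dense_below_cones[OF assms(1,3,5) D p] by blast
  interpret fusion F p \<zeta> d
    using assms(5) p D d unfolding dense_in_def by unfold_locales auto
  have "d ` p \<subseteq> D" using d by blast
  moreover have "|d ` p| \<le>o (kord :: 'k rel)"
    using card_of_image_le_kord[OF assms(4)] PF_in_seqs[OF p] by blast
  ultimately show "\<exists>q\<in>PF F. le_zeta \<zeta> p q \<and>
      (\<exists>D'. D' \<subseteq> D \<and> |D'| \<le>o (kord :: 'k rel) \<and> predense_above (PF F) D' q)"
    using fused_PF fused_le_zeta fused_predense[OF assms(1,3)] by blast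
qed

end
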